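(* Let $\bm{x}\in\mathbb{R}^d$, $X\in\mathbb{R}^{d\times n}$, ${\bm w}\in\mathbb{R}^n$, $\alpha_1>0$, $\alpha_2\ge 0$, and define for ${\bm z}\in\mathbb{R}^n$ $$f({\bm z})=\tfrac12\|\bm{x}-X{\bm z}\|_2^2+\alpha_1\|X\,\mathrm{Diag}({\bm z})\|_*+\tfrac{\alpha_2}{2}\|{\bm z}-{\bm w}\|_2^2 .$$ Suppose (after reordering columns/coordinates consistently) $X=[\hat X,\tilde X]$ with $\tilde X\in\mathbb{R}^{d\times q}$, $\hat X\in\mathbb{R}^{d\times(n-q)}$, ${\bm w}=[\hat{\bm w};\tilde{\bm w}]$ with $\tilde{\bm w}\in\mathbb{R}^q$, and let ${\bm z}=[\hat{\bm z};\tilde{\bm z}]$ be any vector split the same way. Let $\bar{\bm x}_0=\tilde X\mathbf{1}/q$, $\bar z=\mathbf{1}^T\tilde{\bm z}/q$, $\bar w=\mathbf{1}^T\tilde{\bm w}/q$, and let $\epsilon\ge0$ be such that $$\max\{\|\tilde X-\bar{\bm x}_0\mathbf{1}^T\|_*,\ \|\tilde X-\bar{\bm x}_0\mathbf{1}^T\|_F,\ \|\tilde X-\bar{\bm x}_0\mathbf{1}^T\|_2\}\le\epsilon\quad\text{and}\quad\|\tilde{\bm w}-\bar w\mathbf{1}\|_2\le\epsilon .$$ Let ${\bm y}^*\in\mathbb{R}^q$ be the optimal solution of $\min_{{\bm y}}\|{\bm y}-\tilde{\bm w}\|_2^2$ s.t. ${\bm y}^T\mathbf{1}=q\bar z$.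 Assume $\bar{\bm x}_0\neq 0$ and $[\hat X\mathrm{Diag}(\hat{\bm z})\ \ \bar{\bm x}_0\tilde{\bm z}^T]\neq 0$. Define $$\gamma=\Big(\big(\alpha_1+\|\bm{x}-\hat X\hat{\bm z}-\tilde X(\bar z\mathbf{1})\|_2\big)\|\tilde{\bm z}\|_2+\alpha_1|\bar z|\Big)\epsilon,$$ $$\delta=\sqrt{\frac{\Big(2\gamma-\alpha_2\sum_{j=1}^q(y_j^*-\bar z)(y_j^*+\bar z-2\tilde w_j)\Big)\,\big\|[\hat X\mathrm{Diag}(\hat{\bm z})\ \ \bar{\bm x}_0\tilde{\bm z}^T]\big\|_2}{\alpha_1\|\bar{\bm x}_0\|_2^2}} .$$ If $\|\tilde{\bm z}-\bar z\mathbf{1}\|_2>\delta$, then $f([\hat{\bm z};\tilde{\bm z}])>f([\hat{\bm z};\bar z\mathbf{1}])$.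
   Context: $\|\cdot\|_*$ is the nuclear norm (sum of singular values), $\|\cdot\|_F$ the Frobenius norm, $\|\cdot\|_2$ the Euclidean norm for vectors and spectral norm for matrices. $\mathrm{Diag}({\bm z})$ is the diagonal matrix with ${\bm z}$ on its main diagonal; $\mathbf{1}$ is the all-ones vector of the appropriate length ($\mathbb{R}^q$ above). The quantity $\|X\mathrm{Diag}({\bm z})\|_*$ is called the trace Lasso of ${\bm z}$. (The expression under the square root is nonnegative since $\gamma\ge0$ and $\sum_j(y_j^*-\bar z)(y_j^*+\bar z-2\tilde w_j)=\|{\bm y}^*-\tilde{\bm w}\|_2^2-\|\bar z\mathbf{1}-\tilde{\bm w}\|_2^2\le 0$.) *)

theory Defs
  imports "Jordan_Normal_Form.Char_Poly"
begin

definition vnorm :: "real vec \<Rightarrow> real" where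
  "vnorm v = sqrt (\<Sum>i<dim_vec v. (v $ i)^2)"

definition ones :: "nat \<Rightarrow> real vec" where
  "ones q = vec q (\<lambda>_. 1)"

definition Diag :: "real vec \<Rightarrow> real mat" where
  "Diag z = mat (dim_vec z) (dim_vec z) (\<lambda>(i,j). if i = j then z $ i else 0)"

definition hcat :: "real mat \<Rightarrow> real mat \<Rightarrow> real mat" where
  "hcat A B = mat (dim_row A) (dim_col A + dim_col B)
     (\<lambda>(i,j). if j < dim_col A then A $$ (i,j) else B $$ (i, j - dim_col A))"

definition outer :: "real vec \<Rightarrow> real vec \<Rightarrow> real mat" where
  "outer u v = mat (dim_vec u) (dim_vec v) (\<lambda>(i,j). u $ i * v $ j)"

(* eigenvalues of A^T A (as the set of roots of its characteristic polynomial);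
   singular values are their square roots, counted with algebraic multiplicity *)
definition gram_eigs :: "real mat \<Rightarrow> real set" where
  "gram_eigs A = {t. poly (char_poly (transpose_mat A * A)) t = 0}"

(* nuclear norm: sum of singular values (with multiplicity) *)
definition nuc_norm :: "real mat \<Rightarrow> real" where
  "nuc_norm A = (\<Sum>t\<in>gram_eigs A.
      real (order t (char_poly (transpose_mat A * A))) * sqrt t)"

(* spectral norm: largest singular value (0 for an empty matrix) *)
definition spec_norm :: "real mat \<Rightarrow> real" where
  "spec_norm A = Max (insert 0 (sqrt ` gram_eigs A))"

definition frob_norm :: "real mat \<Rightarrow> real" where
  "frob_norm A = sqrt (\<Sum>i<dim_row A. \<Sum>j<dim_col A. (A $$ (i,j))^2)"

definition obj :: "real vec \<Rightarrow> real mat \<Rightarrow> real \<Rightarrow> real \<Rightarrow> real vec \<Rightarrow> real vec \<Rightarrow> real" where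
  "obj x X \<alpha>1 \<alpha>2 w z =
     (1/2) * (vnorm (x - X *\<^sub>v z))^2 + \<alpha>1 * nuc_norm (X * Diag z)
     + (\<alpha>2/2) * (vnorm (z - w))^2"

end

theory Submission
  imports Defs "HOL-Computational_Algebra.Fundamental_Theorem_Algebra"
    "Jordan_Normal_Form.Schur_Decomposition" "HOL-Analysis.L2_Norm"
begin

text \<open>
  Write \<open>z\<^sub>1 = [z_hat; z_tilde]\<close> and \<open>z\<^sub>2 = [z_hat; z_bar 1]\<close>. Since
  \<open>X_tilde (z_tilde - z_bar 1) = (X_tilde - x\<^sub>0 1\<^sup>T) (z_tilde - z_bar 1)\<close>, the least-squares terms of
  \<open>f(z\<^sub>1)\<close> and \<open>f(z\<^sub>2)\<close> differ by at most \<open>\<epsilon> \<parallel>r\<parallel> \<parallel>z_tilde\<parallel>\<close>; as \<open>y\<^sup>*\<close> is the projection of \<open>w_tilde\<close>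
  onto a hyperplane through \<open>z_tilde\<close> and \<open>z_bar 1\<close>, the ridge terms differ by at least
  \<open>\<Sum>\<^sub>j (y\<^sup>*\<^sub>j - z_bar)(y\<^sup>*\<^sub>j + z_bar - 2 w_tilde\<^sub>j)\<close>.
  For the trace Lasso terms, nuclear norm duality (derived from the spectral theorem for \<open>X\<^sup>T X\<close>)
  shows that replacing \<open>X_tilde\<close> by \<open>x\<^sub>0 1\<^sup>T\<close> changes them by at most \<open>\<epsilon> \<parallel>z_tilde\<parallel>\<close> and
  \<open>\<epsilon> |z_bar|\<close>. The resulting matrices \<open>M = [X_hat Diag(z_hat), x\<^sub>0 z_tilde\<^sup>T]\<close> and
  \<open>M_bar = [X_hat Diag(z_hat), z_bar x\<^sub>0 1\<^sup>T]\<close> differ by a rank-one matrix whose row vector lies in the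
  kernel of \<open>M_bar\<close>; a dual certificate of \<open>M_bar\<close> annihilating it, tested against \<open>M\<close>, gives
  \<open>\<parallel>M\<parallel>\<^sub>* \<ge> \<parallel>M_bar\<parallel>\<^sub>* + \<parallel>z_tilde - z_bar 1\<parallel>\<^sup>2 \<parallel>x\<^sub>0\<parallel>\<^sup>2 / (2 \<parallel>M\<parallel>\<^sub>2)\<close>. Altogether
  \<open>f(z\<^sub>1) - f(z\<^sub>2) \<ge> \<alpha>\<^sub>1 \<parallel>z_tilde - z_bar 1\<parallel>\<^sup>2 \<parallel>x\<^sub>0\<parallel>\<^sup>2 / (2 \<parallel>M\<parallel>\<^sub>2) - \<gamma> + \<alpha>\<^sub>2 S / 2\<close>,
  which is positive as soon as \<open>\<parallel>z_tilde - z_bar 1\<parallel> > \<delta>\<close>.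
\<close>

section \<open>Spectral theorem for real symmetric matrices\<close>

lemma real_cscalar_prod [simp]: "(v :: real vec) \<bullet>c w = v \<bullet> w"
proof -
  have "conjugate w = w" by (rule eq_vecI) (auto simp: conjugate_vec_def)
  thus ?thesis by simp
qed

lemma index_mult_mat_sum:
  assumes "A \<in> carrier_mat a b" "B \<in> carrier_mat b c" "i < a" "j < c"
  shows "(A * B) $$ (i,j) = (\<Sum>k<b. A $$ (i,k) * B $$ (k,j))"
  using assms by (auto simp: scalar_prod_def lessThan_atLeast0 intro!: sum.cong)

lemma transpose_mult_sandwich:
  fixes W V S :: "'a :: comm_ring_1 mat"
  assumes "W \<in> carrier_mat n n" "V \<in> carrier_mat n n" "S \<in> carrier_mat n n"
  shows "transpose_mat (W * V) * S * (W * V) = transpose_mat V * (transpose_mat W * S * W) * V"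
  using assms by (simp add: transpose_mult[of W n n V n] assoc_mult_mat[of _ n n _ n _ n])

lemma symmetric_mat_hermitian_form_real:
  fixes S :: "real mat" and v :: "complex vec"
  assumes S: "S \<in> carrier_mat n n" and sym: "transpose_mat S = S"
  shows "Im (\<Sum>i<n. \<Sum>j<n. cnj (v $ i) * of_real (S $$ (i,j)) * v $ j) = 0"
proof -
  define s where "s = (\<Sum>i<n. \<Sum>j<n. cnj (v $ i) * of_real (S $$ (i,j)) * v $ j)"
  have Sij: "S $$ (j,i) = S $$ (i,j)" if "i < n" "j < n" for i j
    using arg_cong[OF sym, of "\<lambda>A. A $$ (i,j)"] S that by simp
  have "cnj s = (\<Sum>i<n. \<Sum>j<n. v $ i * of_real (S $$ (i,j)) * cnj (v $ j))"
    unfolding s_def by (simp add: cnj_sum)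
  also have "\<dots> = (\<Sum>j<n. \<Sum>i<n. v $ i * of_real (S $$ (i,j)) * cnj (v $ j))"
    by (rule sum.swap)
  also have "\<dots> = s" unfolding s_def
    by (intro sum.cong refl, auto simp: Sij mult.commute mult.left_commute)
  finally show ?thesis unfolding s_def[symmetric] by (metis cnj.simps(2) neg_equal_zero)
qed

text \<open>For a complex eigenpair \<open>(l, v)\<close> the real number \<open>v\<^sup>H S v\<close> equals \<open>l \<parallel>v\<parallel>\<^sup>2\<close>, so \<open>l\<close> is real.\<close>

lemma symmetric_mat_real_eigenvalue:
  fixes S :: "real mat"
  assumes S: "S \<in> carrier_mat n n" and sym: "transpose_mat S = S" and n: "n > 0"
  shows "\<exists>e. eigenvalue S e"
proof -
  let ?Sc = "map_mat complex_of_real S"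
  have Sc: "?Sc \<in> carrier_mat n n" using S by auto
  have cp: "char_poly ?Sc = map_poly of_real (char_poly S)"
    using of_real_hom.char_poly_hom[OF S] by simp
  have "degree (char_poly ?Sc) = n" using degree_monic_char_poly[OF Sc] by auto
  then obtain l where l: "poly (char_poly ?Sc) l = 0"
    using alg_closed_imp_poly_has_root[of "char_poly ?Sc"] n by auto
  hence "eigenvalue ?Sc l" using eigenvalue_root_char_poly[OF Sc] by simp
  then have "eigenvector ?Sc (find_eigenvector ?Sc l) l" using find_eigenvector[OF Sc] by blast
  then obtain v where v: "v \<in> carrier_vec n" and v0: "v \<noteq> 0\<^sub>v n" and Sv: "?Sc *\<^sub>v v = l \<cdot>\<^sub>v v"
    unfolding eigenvector_def using Sc by auto
  have Sv_i: "(\<Sum>j<n. of_real (S $$ (i,j)) * v $ j) = l * v $ i" if "i < n" for i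
  proof -
    have "(?Sc *\<^sub>v v) $ i = (\<Sum>j<n. of_real (S $$ (i,j)) * v $ j)"
      using that S v by (auto simp: mult_mat_vec_def scalar_prod_def lessThan_atLeast0 intro!: sum.cong)
    thus ?thesis using Sv that v by simp
  qed
  define N where "N = (\<Sum>i<n. (cmod (v $ i))^2)"
  have "(\<Sum>i<n. \<Sum>j<n. cnj (v $ i) * of_real (S $$ (i,j)) * v $ j)
      = (\<Sum>i<n. cnj (v $ i) * (\<Sum>j<n. of_real (S $$ (i,j)) * v $ j))"
    by (simp add: sum_distrib_left mult.assoc)
  also have "\<dots> = l * (\<Sum>i<n. cnj (v $ i) * v $ i)"
    using Sv_i by (simp add: sum_distrib_left algebra_simps)
  also have "(\<Sum>i<n. cnj (v $ i) * v $ i) = of_real N"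
    unfolding N_def of_real_sum by (intro sum.cong refl) (metis complex_norm_square mult.commute)
  finally have "Im (l * of_real N) = 0" using symmetric_mat_hermitian_form_real[OF S sym, of v] by simp
  moreover obtain k where "k < n" "v $ k \<noteq> 0" using v v0 by (metis eq_vecI carrier_vecD index_zero_vec)
  then have "N > 0" unfolding N_def by (intro sum_pos2[of _ k]) auto
  ultimately have "l = of_real (Re l)" by (simp add: complex_eq_iff)
  then have "of_real (poly (char_poly S) (Re l)) = (0::complex)"
    using l cp by (metis of_real_hom.poly_map_poly)
  hence "poly (char_poly S) (Re l) = 0" by simp
  thus ?thesis using eigenvalue_root_char_poly[OF S] by blast
qed

lemma orthonormal_extension:
  fixes v :: "real vec"
  assumes v: "v \<in> carrier_vec n" and v1: "v \<bullet> v = 1"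
  shows "\<exists>W \<in> carrier_mat n n. transpose_mat W * W = 1\<^sub>m n \<and> col W 0 = v"
proof -
  have v0: "v \<noteq> 0\<^sub>v n" using v1 v by auto
  have n: "n > 0" using v v0 by (metis carrier_vecD eq_vecI gr0I index_zero_vec(2) less_nat_zero_code)
  interpret cof_vec_space n "TYPE(real)" .
  define b where "b = basis_completion v"
  from basis_completion[OF v v0, folded b_def]
  have dist_b: "distinct b" and indep: "\<not> lin_dep (set b)" and bc: "set b \<subseteq> carrier_vec n"
    and hdb: "hd b = v" and len_b: "length b = n" by auto
  from hdb len_b n obtain vs where bv: "b = v # vs" by (cases b, auto)
  define ws where "ws = gram_schmidt n b"
  from gram_schmidt_result[OF bc dist_b indep refl, folded ws_def]
  have wsc: "set ws \<subseteq> carrier_vec n" and orth: "corthogonal ws" and lws: "length ws = n"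
    by (auto simp: len_b)
  from gram_schmidt_hd[OF v, of vs, folded bv] have "hd ws = v" unfolding ws_def .
  then have ws0: "ws ! 0 = v" using lws n by (metis hd_conv_nth length_0_conv less_not_refl3)
  have wsi: "ws ! i \<in> carrier_vec n" if "i < n" for i using wsc lws that by (simp add: nth_mem subsetD)
  have orth': "ws ! i \<bullet> ws ! j = 0 \<longleftrightarrow> i \<noteq> j" if "i < n" "j < n" for i j
    using corthogonalD[OF orth, of i j] that lws by simp
  have pos: "ws ! i \<bullet> ws ! i > 0" if "i < n" for i
    using orth'[OF that that] by (simp add: scalar_prod_def sum_nonneg order_le_neq_trans)
  define W where "W = mat_of_cols n (map (\<lambda>w. (1 / sqrt (w \<bullet> w)) \<cdot>\<^sub>v w) ws)"
  have Wc: "W \<in> carrier_mat n n" unfolding W_def mat_of_cols_def using lws by simp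
  have colW: "col W i = (1 / sqrt (ws ! i \<bullet> ws ! i)) \<cdot>\<^sub>v ws ! i" if "i < n" for i
    unfolding W_def using that lws wsi by (simp add: col_mat_of_cols)
  have "transpose_mat W * W = 1\<^sub>m n"
  proof (rule eq_matI)
    fix i j assume "i < dim_row (1\<^sub>m n)" and "j < dim_col (1\<^sub>m n)"
    hence i: "i < n" and j: "j < n" by auto
    have "(transpose_mat W * W) $$ (i,j)
        = (ws!i \<bullet> ws!j) / (sqrt (ws!i \<bullet> ws!i) * sqrt (ws!j \<bullet> ws!j))"
      using Wc i j colW[OF i] colW[OF j] wsi[OF i] wsi[OF j] by simp
    also have "\<dots> = 1\<^sub>m n $$ (i,j)"
      using orth'[OF i j] pos[OF i] i j by (cases "i = j") auto
    finally show "(transpose_mat W * W) $$ (i,j) = 1\<^sub>m n $$ (i,j)" .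
  qed (use Wc in auto)
  moreover have "col W 0 = v" using colW[OF n] ws0 v1 by simp
  ultimately show ?thesis using Wc by blast
qed

lemma symmetric_mat_deflation:
  fixes S :: "real mat"
  assumes S: "S \<in> carrier_mat (Suc m) (Suc m)" and sym: "transpose_mat S = S"
  obtains W e A3 where "W \<in> carrier_mat (Suc m) (Suc m)" "transpose_mat W * W = 1\<^sub>m (Suc m)"
    and "A3 \<in> carrier_mat m m" "transpose_mat A3 = A3"
    and "transpose_mat W * S * W = four_block_mat (mat 1 1 (\<lambda>_. e)) (0\<^sub>m 1 m) (0\<^sub>m m 1) A3"
proof -
  obtain e where e: "eigenvalue S e" using symmetric_mat_real_eigenvalue[OF S sym] by auto
  then obtain v0 where v0: "v0 \<in> carrier_vec (Suc m)" "v0 \<noteq> 0\<^sub>v (Suc m)" "S *\<^sub>v v0 = e \<cdot>\<^sub>v v0"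
    using find_eigenvector[OF S e] carrier_matD(1)[OF S] unfolding eigenvector_def by metis
  have "v0 \<bullet> v0 \<noteq> 0" using v0 by (metis conjugate_square_eq_0_vec real_cscalar_prod)
  hence pos: "v0 \<bullet> v0 > 0" by (simp add: scalar_prod_def sum_nonneg order_le_neq_trans)
  define v where "v = (1 / sqrt (v0 \<bullet> v0)) \<cdot>\<^sub>v v0"
  have v: "v \<in> carrier_vec (Suc m)" unfolding v_def using v0 by simp
  have "v \<bullet> v = (v0 \<bullet> v0) / (sqrt (v0 \<bullet> v0) * sqrt (v0 \<bullet> v0))"
    unfolding v_def using v0 by simp
  then have vv: "v \<bullet> v = 1" using pos by simp
  have Sv: "S *\<^sub>v v = e \<cdot>\<^sub>v v" unfolding v_def using v0 S
    by (simp add: mult_mat_vec smult_smult_assoc mult.commute)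
  obtain W where W: "W \<in> carrier_mat (Suc m) (Suc m)" and WW: "transpose_mat W * W = 1\<^sub>m (Suc m)"
    and W0: "col W 0 = v" using orthonormal_extension[OF v vv] by auto
  define A' where "A' = transpose_mat W * S * W"
  have A': "A' \<in> carrier_mat (Suc m) (Suc m)" unfolding A'_def using W S by auto
  have A'_assoc: "A' = transpose_mat W * (S * W)" unfolding A'_def using W S by (simp add: assoc_mult_mat)
  have "transpose_mat A' = transpose_mat (S * W) * transpose_mat (transpose_mat W)"
    unfolding A'_assoc using W S by (intro transpose_mult) auto
  also have "\<dots> = A'" unfolding A'_def using W S sym by (simp add: transpose_mult)
  finally have symA': "transpose_mat A' = A'" .
  have A'_col0: "A' $$ (i,0) = (if i = 0 then e else 0)" if i: "i < Suc m" for i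
  proof -
    have "A' $$ (i,0) = col W i \<bullet> (S *\<^sub>v col W 0)"
      unfolding A'_assoc using i W S col_mult2[OF S W, of 0] by simp
    also have "\<dots> = e * (transpose_mat W * W) $$ (i,0)" using W W0 v i Sv by simp
    finally show ?thesis using WW i by simp
  qed
  have A'_swap: "A' $$ (j,i) = A' $$ (i,j)" if "i < Suc m" "j < Suc m" for i j
    using arg_cong[OF symA', of "\<lambda>B. B $$ (i,j)"] A' that by simp
  have A'_row0: "A' $$ (0,j) = (if j = 0 then e else 0)" if j: "j < Suc m" for j
    using A'_swap[of 0 j] A'_col0[OF j] j by simp
  define A3 where "A3 = mat m m (\<lambda>(i,j). A' $$ (Suc i, Suc j))"
  have A3: "A3 \<in> carrier_mat m m" unfolding A3_def by simp
  have "transpose_mat A3 = A3"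
    by (rule eq_matI) (auto simp: A3_def A'_swap)
  moreover have "A' = four_block_mat (mat 1 1 (\<lambda>_. e)) (0\<^sub>m 1 m) (0\<^sub>m m 1) A3"
    by (rule eq_matI) (use A' A'_col0 A'_row0 in \<open>auto simp: A3_def\<close>)
  ultimately show ?thesis using that W WW A3 unfolding A'_def by blast
qed

lemma symmetric_mat_orthogonal_diagonalization:
  fixes S :: "real mat"
  assumes "S \<in> carrier_mat n n" "transpose_mat S = S"
  shows "\<exists>U \<in> carrier_mat n n. transpose_mat U * U = 1\<^sub>m n \<and> U * transpose_mat U = 1\<^sub>m n \<and>
     (\<forall>i<n. \<forall>j<n. i \<noteq> j \<longrightarrow> (transpose_mat U * S * U) $$ (i,j) = 0)"
  using assms
proof (induction n arbitrary: S)
  case 0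
  show ?case by (rule bexI[of _ "1\<^sub>m 0"]) auto
next
  case (Suc m S)
  obtain W e A3 where W: "W \<in> carrier_mat (Suc m) (Suc m)" and WW: "transpose_mat W * W = 1\<^sub>m (Suc m)"
    and A3: "A3 \<in> carrier_mat m m" "transpose_mat A3 = A3"
    and WSW: "transpose_mat W * S * W = four_block_mat (mat 1 1 (\<lambda>_. e)) (0\<^sub>m 1 m) (0\<^sub>m m 1) A3"
    using symmetric_mat_deflation[OF Suc.prems] by blast
  obtain U3 where U3: "U3 \<in> carrier_mat m m" "transpose_mat U3 * U3 = 1\<^sub>m m"
    and diag3: "\<forall>i<m. \<forall>j<m. i \<noteq> j \<longrightarrow> (transpose_mat U3 * A3 * U3) $$ (i,j) = 0"
    using Suc.IH[OF A3] by blast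
  define V where "V = four_block_mat (1\<^sub>m 1) (0\<^sub>m 1 m) (0\<^sub>m m 1) U3"
  have V: "V \<in> carrier_mat (Suc m) (Suc m)"
    unfolding V_def using four_block_carrier_mat[of "1\<^sub>m 1" 1 1 U3 m m] U3 by simp
  have tV: "transpose_mat V = four_block_mat (1\<^sub>m 1) (0\<^sub>m 1 m) (0\<^sub>m m 1) (transpose_mat U3)"
    unfolding V_def using U3 by (subst transpose_four_block_mat) auto
  have "transpose_mat V * V = four_block_mat (1\<^sub>m 1) (0\<^sub>m 1 m) (0\<^sub>m m 1) (1\<^sub>m m)"
    unfolding tV unfolding V_def using U3 by (subst mult_four_block_mat) auto
  then have VV: "transpose_mat V * V = 1\<^sub>m (Suc m)" by simp
  have VtA': "transpose_mat V * (transpose_mat W * S * W)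
      = four_block_mat (mat 1 1 (\<lambda>_. e)) (0\<^sub>m 1 m) (0\<^sub>m m 1) (transpose_mat U3 * A3)"
    unfolding WSW tV using U3 A3 by (subst mult_four_block_mat) auto
  have "transpose_mat V * (transpose_mat W * S * W) * V
      = four_block_mat (mat 1 1 (\<lambda>_. e)) (0\<^sub>m 1 m) (0\<^sub>m m 1) (transpose_mat U3 * A3 * U3)"
    unfolding VtA' unfolding V_def using U3 A3 by (subst mult_four_block_mat) auto
  moreover define U where "U = W * V"
  moreover have "transpose_mat U * S * U = transpose_mat V * (transpose_mat W * S * W) * V"
    unfolding U_def using W V Suc.prems(1) by (rule transpose_mult_sandwich)
  ultimately have diag: "(transpose_mat U * S * U) $$ (i,j) = 0" if "i < Suc m" "j < Suc m" "i \<noteq> j" for i j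
    using that diag3 U3 A3 by auto
  have U: "U \<in> carrier_mat (Suc m) (Suc m)" unfolding U_def using W V by simp
  have UU: "transpose_mat U * U = 1\<^sub>m (Suc m)"
    using transpose_mult_sandwich[OF W V, of "1\<^sub>m (Suc m)"] W V WW VV unfolding U_def by simp
  then have "U * transpose_mat U = 1\<^sub>m (Suc m)"
    using mat_mult_left_right_inverse[OF _ U UU] U by auto
  with U UU diag show ?case by blast
qed

lemma orthogonal_mat_col_products:
  fixes U :: "real mat"
  assumes U: "U \<in> carrier_mat n n" and UU: "transpose_mat U * U = 1\<^sub>m n" and jk: "j < n" "k < n"
  shows "(\<Sum>i<n. U $$ (i,j) * U $$ (i,k)) = (if j = k then 1 else 0)"
proof -
  have "(transpose_mat U * U) $$ (j,k) = (\<Sum>i<n. transpose_mat U $$ (j,i) * U $$ (i,k))"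
    using U jk by (intro index_mult_mat_sum) auto
  thus ?thesis using UU U jk by simp
qed

lemma prod_list_map_upt_zero: "prod_list (map f [0..<n]) = (\<Prod>i<n. f i)"
  by (induction n) (auto simp: lessThan_Suc mult.commute)

lemma symmetric_mat_eigen_decomposition:
  fixes S :: "real mat"
  assumes S: "S \<in> carrier_mat n n" and sym: "transpose_mat S = S"
  obtains U lam where "U \<in> carrier_mat n n" "transpose_mat U * U = 1\<^sub>m n" "U * transpose_mat U = 1\<^sub>m n"
    and "\<And>l k. l < n \<Longrightarrow> k < n \<Longrightarrow> (S * U) $$ (l,k) = lam k * U $$ (l,k)"
    and "char_poly S = (\<Prod>k<n. [:- lam k, 1:])"
proof -
  obtain U where U: "U \<in> carrier_mat n n" and UU: "transpose_mat U * U = 1\<^sub>m n"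
    and UU': "U * transpose_mat U = 1\<^sub>m n"
    and diag: "\<forall>i<n. \<forall>j<n. i \<noteq> j \<longrightarrow> (transpose_mat U * S * U) $$ (i,j) = 0"
    using symmetric_mat_orthogonal_diagonalization[OF S sym] by blast
  define D where "D = transpose_mat U * S * U"
  define lam where "lam k = D $$ (k,k)" for k
  have D: "D \<in> carrier_mat n n" unfolding D_def using U S by simp
  have tU: "transpose_mat U \<in> carrier_mat n n" using U by simp
  have "U * D = (U * transpose_mat U) * (S * U)"
    unfolding D_def using U S by (simp add: assoc_mult_mat[of _ n n _ n _ n])
  then have SU: "S * U = U * D" using UU' U S by simp
  have eigen: "(S * U) $$ (l,k) = lam k * U $$ (l,k)" if "l < n" "k < n" for l k
  proof -
    have "(U * D) $$ (l,k) = (\<Sum>j<n. U $$ (l,j) * D $$ (j,k))"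
      using D U that by (intro index_mult_mat_sum) auto
    also have "\<dots> = U $$ (l,k) * D $$ (k,k)"
      using that diag unfolding D_def by (subst sum.remove[of _ k]) auto
    finally show ?thesis using SU unfolding lam_def by (simp add: mult.commute)
  qed
  have "U * D * transpose_mat U = U * transpose_mat U * (S * (U * transpose_mat U))"
    unfolding D_def using U tU S by (simp add: assoc_mult_mat[of _ n n _ n _ n])
  then have "similar_mat_wit S D U (transpose_mat U)"
    unfolding similar_mat_wit_def using S D U tU UU UU' by (auto simp: Let_def)
  hence "char_poly S = char_poly D" using char_poly_similar unfolding similar_mat_def by blast
  also have "char_poly D = (\<Prod>a\<leftarrow>diag_mat D. [:- a, 1:])"
    using char_poly_upper_triangular[OF D] diag D unfolding upper_triangular_def D_def by auto
  also have "\<dots> = (\<Prod>k<n. [:- lam k, 1:])"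
    unfolding diag_mat_def lam_def using D by (simp add: prod_list_map_upt_zero)
  finally show ?thesis using that U UU UU' eigen by blast
qed

lemma order_prod_linear_factors:
  fixes lam :: "nat \<Rightarrow> real"
  shows "Polynomial.order t (\<Prod>k<n. [:- lam k, 1:]) = card {k. k < n \<and> lam k = t}"
proof (induction n)
  case 0 thus ?case by simp
next
  case (Suc n)
  have "(\<Prod>k<n. [:- lam k, 1:]) \<noteq> 0" by (simp add: prod_zero_iff)
  then have "(\<Prod>k<n. [:- lam k, 1:]) * [:- lam n, 1:] \<noteq> 0"
    using no_zero_divisors pCons_eq_0_iff zero_neq_one by metis
  then have "Polynomial.order t (\<Prod>k<Suc n. [:- lam k, 1:])
      = Polynomial.order t (\<Prod>k<n. [:- lam k, 1:]) + Polynomial.order t [:- lam n, 1:]"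
    unfolding prod.lessThan_Suc by (rule order_mult)
  also have "Polynomial.order t [:- lam n, 1:] = (if lam n = t then 1 else 0)" by (simp add: order_linear')
  also have "{k. k < Suc n \<and> lam k = t} = {k. k < n \<and> lam k = t} \<union> (if lam n = t then {n} else {})"
    by (auto simp: less_Suc_eq)
  hence "card {k. k < Suc n \<and> lam k = t} = card {k. k < n \<and> lam k = t} + (if lam n = t then 1 else 0)"
    by (auto simp: card_insert_if)
  ultimately show ?case using Suc.IH by simp
qed

lemma sum_lessThan_add_split:
  fixes f :: "nat \<Rightarrow> 'a::comm_monoid_add"
  shows "(\<Sum>c<p+q. f c) = (\<Sum>l<p. f l) + (\<Sum>j<q. f (p+j))"
  by (induction q) (auto simp: add.commute add.left_commute)

lemma sum_mult_le_sqrt_sum_sq: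
  fixes f g :: "'a \<Rightarrow> real"
  shows "(\<Sum>i\<in>I. f i * g i) \<le> sqrt (\<Sum>i\<in>I. (f i)^2) * sqrt (\<Sum>i\<in>I. (g i)^2)"
proof -
  have "(\<Sum>i\<in>I. f i * g i) \<le> (\<Sum>i\<in>I. \<bar>f i\<bar> * \<bar>g i\<bar>)"
    by (intro sum_mono) (simp add: abs_mult[symmetric])
  also have "\<dots> \<le> L2_set f I * L2_set g I" by (rule L2_set_mult_ineq)
  finally show ?thesis unfolding L2_set_def .
qed

lemma sqrt_one_minus_le:
  assumes "0 \<le> t" "t \<le> 1"
  shows "sqrt (1 - t) \<le> 1 - t / 2"
proof -
  have "(1 - t) \<le> (1 - t/2)^2" by (simp add: power2_eq_square algebra_simps)
  hence "sqrt (1 - t) \<le> sqrt ((1 - t/2)^2)" by (rule real_sqrt_le_mono)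
  also have "\<dots> = 1 - t/2" using assms by simp
  finally show ?thesis .
qed

lemma pos_of_gt_sqrt_threshold:
  fixes a \<sigma> N c t D :: real
  assumes "a > 0" "\<sigma> > 0" "N > 0" "c \<ge> 0"
    and "t > sqrt (c * \<sigma> / (a * N))" and "D \<ge> a * t^2 * N / (2 * \<sigma>) - c / 2"
  shows "D > 0"
proof -
  have R: "c * \<sigma> / (a * N) \<ge> 0" using assms by simp
  then have "sqrt (c * \<sigma> / (a * N)) \<ge> 0" by simp
  then have "c * \<sigma> / (a * N) < t^2"
    using assms(5) R by (metis real_sqrt_less_iff real_sqrt_pow2 power_strict_mono zero_less_numeral
        order_le_less_trans real_sqrt_ge_zero)
  then have "c / 2 < a * t^2 * N / (2 * \<sigma>)" using assms(1-3) by (simp add: field_simps)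
  then show ?thesis using assms(6) by linarith
qed

section \<open>Nuclear norm duality\<close>

text \<open>Vectors of \<open>\<real>\<^sup>n\<close> are represented by their coordinate functions \<open>nat \<Rightarrow> real\<close>, restricted to \<open>{..<n}\<close>.\<close>

definition sum_sq :: "nat \<Rightarrow> (nat \<Rightarrow> real) \<Rightarrow> real" where
  "sum_sq n x = (\<Sum>i<n. (x i)^2)"

definition mat_apply :: "real mat \<Rightarrow> nat \<Rightarrow> (nat \<Rightarrow> real) \<Rightarrow> nat \<Rightarrow> real" where
  "mat_apply A n x i = (\<Sum>l<n. A $$ (i,l) * x l)"

definition frob_inner :: "real mat \<Rightarrow> real mat \<Rightarrow> nat \<Rightarrow> nat \<Rightarrow> real" where
  "frob_inner W A m n = (\<Sum>i<m. \<Sum>j<n. W $$ (i,j) * A $$ (i,j))"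

definition contraction :: "real mat \<Rightarrow> nat \<Rightarrow> nat \<Rightarrow> bool" where
  "contraction W m n \<longleftrightarrow> (\<forall>x. sum_sq m (mat_apply W n x) \<le> sum_sq n x)"

lemma sum_sq_nonneg: "sum_sq n x \<ge> 0"
  unfolding sum_sq_def by (simp add: sum_nonneg)

lemma mat_apply_diff: "mat_apply W n (\<lambda>l. x l - c * y l) i = mat_apply W n x i - c * mat_apply W n y i"
  unfolding mat_apply_def by (simp add: sum_subtractf sum_distrib_left algebra_simps)

lemma mat_apply_unit:
  assumes "c < n"
  shows "mat_apply A n (\<lambda>l. if l = c then 1 else 0) i = A $$ (i,c)"
    and "sum_sq n (\<lambda>l. if l = c then 1 else 0) = 1"
proof -
  show "mat_apply A n (\<lambda>l. if l = c then 1 else 0) i = A $$ (i,c)"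
    unfolding mat_apply_def using assms by (simp add: if_distrib cong: if_cong)
  have "sum_sq n (\<lambda>l. if l = c then 1 else 0) = (\<Sum>l<n. if l = c then 1 else 0)"
    unfolding sum_sq_def by (intro sum.cong) auto
  then show "sum_sq n (\<lambda>l. if l = c then 1 else 0) = 1" using assms by simp
qed

text \<open>\<open>u k\<close> (\<open>k < n\<close>) are the right singular vectors of \<open>A\<close> and \<open>lam k\<close> the squared singular values.\<close>

locale gram_eigenbasis =
  fixes A :: "real mat" and m n :: nat and u :: "nat \<Rightarrow> nat \<Rightarrow> real" and lam :: "nat \<Rightarrow> real"
  assumes orthonormal: "\<And>j k. j < n \<Longrightarrow> k < n \<Longrightarrow> (\<Sum>i<n. u j i * u k i) = (if j = k then 1 else 0)"
    and complete: "\<And>i l. i < n \<Longrightarrow> l < n \<Longrightarrow> (\<Sum>k<n. u k i * u k l) = (if i = l then 1 else 0)"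
    and images_orthogonal: "\<And>j k. j < n \<Longrightarrow> k < n \<Longrightarrow>
      (\<Sum>i<m. mat_apply A n (u j) i * mat_apply A n (u k) i) = (if j = k then lam k else 0)"
    and nuc_norm_eq: "nuc_norm A = (\<Sum>k<n. sqrt (lam k))"
    and spec_norm_eq: "spec_norm A = Max (insert 0 ((\<lambda>k. sqrt (lam k)) ` {..<n}))"
begin

definition coord :: "(nat \<Rightarrow> real) \<Rightarrow> nat \<Rightarrow> real" where
  "coord x k = (\<Sum>i<n. u k i * x i)"

lemma lam_nonneg: "k < n \<Longrightarrow> lam k \<ge> 0"
  using images_orthogonal[of k k] by (metis (no_types, lifting) power2_eq_square sum_nonneg zero_le_power2)

lemma sqrt_lam_le_spec_norm: "k < n \<Longrightarrow> sqrt (lam k) \<le> spec_norm A"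
  unfolding spec_norm_eq by (intro Max_ge) auto

lemma spec_norm_nonneg: "spec_norm A \<ge> 0"
  unfolding spec_norm_eq by (intro Max_ge) auto

lemma coord_expansion: "l < n \<Longrightarrow> x l = (\<Sum>k<n. coord x k * u k l)"
proof -
  assume l: "l < n"
  have "(\<Sum>k<n. coord x k * u k l) = (\<Sum>k<n. \<Sum>i<n. x i * (u k i * u k l))"
    unfolding coord_def by (intro sum.cong refl) (simp add: sum_distrib_left sum_distrib_right mult_ac)
  also have "\<dots> = (\<Sum>i<n. \<Sum>k<n. x i * (u k i * u k l))" by (rule sum.swap)
  also have "\<dots> = (\<Sum>i<n. x i * (\<Sum>k<n. u k i * u k l))" by (simp add: sum_distrib_left)
  also have "\<dots> = (\<Sum>i<n. if i = l then x i else 0)" using l by (intro sum.cong refl) (simp add: complete)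
  also have "\<dots> = x l" using l by simp
  finally show ?thesis by simp
qed

lemma mat_apply_expansion: "mat_apply W n x i = (\<Sum>k<n. coord x k * mat_apply W n (u k) i)"
proof -
  have "mat_apply W n x i = (\<Sum>l<n. W $$ (i,l) * (\<Sum>k<n. coord x k * u k l))"
    unfolding mat_apply_def by (intro sum.cong refl) (simp add: coord_expansion[symmetric])
  also have "\<dots> = (\<Sum>l<n. \<Sum>k<n. coord x k * (W $$ (i,l) * u k l))"
    by (simp add: sum_distrib_left algebra_simps)
  also have "\<dots> = (\<Sum>k<n. \<Sum>l<n. coord x k * (W $$ (i,l) * u k l))" by (rule sum.swap)
  also have "\<dots> = (\<Sum>k<n. coord x k * mat_apply W n (u k) i)"
    unfolding mat_apply_def by (simp add: sum_distrib_left)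
  finally show ?thesis .
qed

lemma sum_sq_combination: "(\<Sum>i<m. (\<Sum>k<n. g k * mat_apply A n (u k) i)^2) = (\<Sum>k<n. (g k)^2 * lam k)"
proof -
  have "(\<Sum>i<m. (\<Sum>k<n. g k * mat_apply A n (u k) i)^2) = 
     (\<Sum>j<n. \<Sum>k<n. g j * g k * (\<Sum>i<m. mat_apply A n (u j) i * mat_apply A n (u k) i))"
  proof -
    have "(\<Sum>i<m. (\<Sum>k<n. g k * mat_apply A n (u k) i)^2) = (\<Sum>i<m. \<Sum>j<n. \<Sum>k<n. g j * g k * (mat_apply A n (u j) i * mat_apply A n (u k) i))"
      by (simp add: power2_eq_square sum_product algebra_simps)
    also have "\<dots> = (\<Sum>j<n. \<Sum>i<m. \<Sum>k<n. g j * g k * (mat_apply A n (u j) i * mat_apply A n (u k) i))" by (rule sum.swap)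
    also have "\<dots> = (\<Sum>j<n. \<Sum>k<n. \<Sum>i<m. g j * g k * (mat_apply A n (u j) i * mat_apply A n (u k) i))" 
      by (intro sum.cong refl sum.swap)
    finally show ?thesis by (simp add: sum_distrib_left)
  qed
  also have "\<dots> = (\<Sum>j<n. \<Sum>k<n. if j = k then g j * g k * lam k else 0)"
    by (intro sum.cong refl) (simp add: images_orthogonal)
  also have "\<dots> = (\<Sum>k<n. (g k)^2 * lam k)" by (simp add: power2_eq_square)
  finally show ?thesis .
qed

lemma sum_sq_mat_apply: "sum_sq m (mat_apply A n x) = (\<Sum>k<n. lam k * (coord x k)^2)"
proof -
  have "sum_sq m (mat_apply A n x) = (\<Sum>i<m. (\<Sum>k<n. coord x k * mat_apply A n (u k) i)^2)"
    unfolding sum_sq_def using mat_apply_expansion[of A x] by presburger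
  also have "\<dots> = (\<Sum>k<n. (coord x k)^2 * lam k)" by (rule sum_sq_combination)
  finally show ?thesis by (simp add: mult.commute)
qed

lemma parseval: "sum_sq n x = (\<Sum>k<n. (coord x k)^2)"
proof -
  have "sum_sq n x = (\<Sum>l<n. x l * (\<Sum>k<n. coord x k * u k l))"
    unfolding sum_sq_def power2_eq_square by (intro sum.cong refl) (simp add: coord_expansion[symmetric])
  also have "\<dots> = (\<Sum>l<n. \<Sum>k<n. coord x k * (u k l * x l))"
    by (simp add: sum_distrib_left sum_distrib_right mult.commute mult.left_commute)
  also have "\<dots> = (\<Sum>k<n. \<Sum>l<n. coord x k * (u k l * x l))" by (rule sum.swap)
  also have "\<dots> = (\<Sum>k<n. coord x k * coord x k)"
    unfolding coord_def by (simp add: sum_distrib_left)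
  finally show ?thesis by (simp add: power2_eq_square)
qed

lemma sum_sq_eigvec: "k < n \<Longrightarrow> sum_sq n (u k) = 1"
  unfolding sum_sq_def power2_eq_square using orthonormal[of k k] by simp

lemma sum_sq_image_eigvec: "k < n \<Longrightarrow> sum_sq m (mat_apply A n (u k)) = lam k"
  unfolding sum_sq_def power2_eq_square using images_orthogonal[of k k] by simp

lemma frob_inner_eigen: "frob_inner W A m n = (\<Sum>k<n. \<Sum>i<m. mat_apply W n (u k) i * mat_apply A n (u k) i)"
proof -
  have "(\<Sum>k<n. \<Sum>i<m. mat_apply W n (u k) i * mat_apply A n (u k) i) =
     (\<Sum>k<n. \<Sum>i<m. \<Sum>l<n. \<Sum>l'<n. W $$ (i,l) * A $$ (i,l') * (u k l * u k l'))"
    unfolding mat_apply_def sum_product by (intro sum.cong refl) (simp add: algebra_simps)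
  also have "\<dots> = (\<Sum>i<m. \<Sum>k<n. \<Sum>l<n. \<Sum>l'<n. W $$ (i,l) * A $$ (i,l') * (u k l * u k l'))"
    by (rule sum.swap)
  also have "\<dots> = (\<Sum>i<m. \<Sum>l<n. \<Sum>k<n. \<Sum>l'<n. W $$ (i,l) * A $$ (i,l') * (u k l * u k l'))"
    by (intro sum.cong refl sum.swap)
  also have "\<dots> = (\<Sum>i<m. \<Sum>l<n. \<Sum>l'<n. \<Sum>k<n. W $$ (i,l) * A $$ (i,l') * (u k l * u k l'))"
    by (intro sum.cong refl sum.swap)
  also have "\<dots> = (\<Sum>i<m. \<Sum>l<n. \<Sum>l'<n. W $$ (i,l) * A $$ (i,l') * (\<Sum>k<n. u k l * u k l'))"
    by (simp add: sum_distrib_left)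
  also have "\<dots> = (\<Sum>i<m. \<Sum>l<n. \<Sum>l'<n. if l = l' then W $$ (i,l) * A $$ (i,l') else 0)"
    by (intro sum.cong refl) (simp add: complete)
  also have "\<dots> = frob_inner W A m n" unfolding frob_inner_def by simp
  finally show ?thesis by simp
qed

lemma frob_inner_term_le:
  assumes k: "k < n"
  shows "(\<Sum>i<m. mat_apply W n (u k) i * mat_apply A n (u k) i) \<le> sqrt (sum_sq m (mat_apply W n (u k))) * sqrt (lam k)"
proof -
  have "(\<Sum>i<m. mat_apply W n (u k) i * mat_apply A n (u k) i) \<le> sqrt (sum_sq m (mat_apply W n (u k))) * sqrt (sum_sq m (mat_apply A n (u k)))"
    unfolding sum_sq_def by (rule sum_mult_le_sqrt_sum_sq)
  thus ?thesis using sum_sq_image_eigvec[OF k] by simp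
qed

lemma frob_inner_le_nuc_norm:
  assumes W: "contraction W m n"
  shows "frob_inner W A m n \<le> nuc_norm A"
proof -
  have "frob_inner W A m n \<le> (\<Sum>k<n. sqrt (lam k))"
    unfolding frob_inner_eigen
  proof (rule sum_mono)
    fix k assume "k \<in> {..<n}" hence k: "k < n" by simp
    have "sum_sq m (mat_apply W n (u k)) \<le> 1" using W sum_sq_eigvec[OF k] unfolding contraction_def by metis
    hence "sqrt (sum_sq m (mat_apply W n (u k))) \<le> 1" by simp
    hence "sqrt (sum_sq m (mat_apply W n (u k))) * sqrt (lam k) \<le> 1 * sqrt (lam k)"
      using lam_nonneg[OF k] by (intro mult_right_mono) auto
    thus "(\<Sum>i<m. mat_apply W n (u k) i * mat_apply A n (u k) i) \<le> sqrt (lam k)"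
      using frob_inner_term_le[OF k, of W] by linarith
  qed
  thus ?thesis using nuc_norm_eq by simp
qed

lemma sum_sq_mat_apply_le: "sum_sq m (mat_apply A n x) \<le> (spec_norm A)^2 * sum_sq n x"
proof -
  have "sum_sq m (mat_apply A n x) = (\<Sum>k<n. lam k * (coord x k)^2)" by (rule sum_sq_mat_apply)
  also have "\<dots> \<le> (\<Sum>k<n. (spec_norm A)^2 * (coord x k)^2)"
  proof (rule sum_mono)
    fix k assume "k \<in> {..<n}" hence k: "k < n" by simp
    have "lam k = (sqrt (lam k))^2" using lam_nonneg[OF k] by simp
    also have "\<dots> \<le> (spec_norm A)^2" using sqrt_lam_le_spec_norm[OF k] lam_nonneg[OF k] by (intro power_mono) auto
    finally show "lam k * (coord x k)^2 \<le> (spec_norm A)^2 * (coord x k)^2"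
      by (intro mult_right_mono) auto
  qed
  also have "\<dots> = (spec_norm A)^2 * sum_sq n x" by (simp add: parseval sum_distrib_left)
  finally show ?thesis .
qed

lemma frob_inner_term_le_gap:
  assumes W: "contraction W m n" and Wb: "\<forall>i<m. mat_apply W n b i = 0" and b1: "sum_sq n b = 1"
    and k: "k < n"
  shows "(\<Sum>i<m. mat_apply W n (u k) i * mat_apply A n (u k) i) \<le> sqrt (lam k) * (1 - (coord b k)^2 / 2)"
proof -
  let ?y = "\<lambda>l. u k l - coord b k * b l"
  have "sum_sq m (mat_apply W n (u k)) = sum_sq m (mat_apply W n ?y)"
    unfolding sum_sq_def using Wb by (simp add: mat_apply_diff)
  also have "\<dots> \<le> sum_sq n ?y" using W unfolding contraction_def by blast
  also have "sum_sq n ?y = sum_sq n (u k) - 2 * coord b k * (\<Sum>l<n. u k l * b l) + (coord b k)^2 * sum_sq n b"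
    unfolding sum_sq_def
    by (simp add: power2_diff sum.distrib sum_subtractf sum_distrib_left power_mult_distrib algebra_simps)
  also have "\<dots> = 1 - (coord b k)^2"
    using sum_sq_eigvec[OF k] b1 unfolding coord_def by (simp add: power2_eq_square)
  finally have le: "sum_sq m (mat_apply W n (u k)) \<le> 1 - (coord b k)^2" .
  have "sqrt (sum_sq m (mat_apply W n (u k))) \<le> sqrt (1 - (coord b k)^2)"
    using le by (rule real_sqrt_le_mono)
  also have "\<dots> \<le> 1 - (coord b k)^2 / 2"
    using le sum_sq_nonneg[of m "mat_apply W n (u k)"] by (intro sqrt_one_minus_le) auto
  finally have "sqrt (sum_sq m (mat_apply W n (u k))) * sqrt (lam k) \<le> (1 - (coord b k)^2 / 2) * sqrt (lam k)"
    using lam_nonneg[OF k] by (intro mult_right_mono) auto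
  thus ?thesis using frob_inner_term_le[OF k, of W] by (simp add: algebra_simps)
qed

lemma sum_sq_mat_apply_le_weighted:
  "sum_sq m (mat_apply A n b) \<le> spec_norm A * (\<Sum>k<n. sqrt (lam k) * (coord b k)^2)"
proof -
  have "sum_sq m (mat_apply A n b) = (\<Sum>k<n. sqrt (lam k) * sqrt (lam k) * (coord b k)^2)"
    unfolding sum_sq_mat_apply using lam_nonneg by (intro sum.cong refl) simp
  also have "\<dots> \<le> (\<Sum>k<n. spec_norm A * sqrt (lam k) * (coord b k)^2)"
    using sqrt_lam_le_spec_norm lam_nonneg by (intro sum_mono mult_right_mono) auto
  finally show ?thesis by (simp add: sum_distrib_left mult.assoc)
qed

text \<open>A contraction annihilating the unit vector \<open>b\<close> loses \<open>\<sigma>\<^sub>k \<langle>u\<^sub>k,b\<rangle>\<^sup>2/2\<close> on the \<open>k\<close>-th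
  singular direction, and \<open>\<Sum>\<^sub>k \<sigma>\<^sub>k \<langle>u\<^sub>k,b\<rangle>\<^sup>2 \<ge> \<parallel>A b\<parallel>\<^sup>2 / \<parallel>A\<parallel>\<^sub>2\<close>.\<close>

lemma frob_inner_le_nuc_norm_gap:
  assumes W: "contraction W m n" and Wb: "\<forall>i<m. mat_apply W n b i = 0" and b1: "sum_sq n b = 1"
    and sp: "spec_norm A > 0"
  shows "frob_inner W A m n \<le> nuc_norm A - sum_sq m (mat_apply A n b) / (2 * spec_norm A)"
proof -
  have "frob_inner W A m n \<le> (\<Sum>k<n. sqrt (lam k) * (1 - (coord b k)^2 / 2))"
    unfolding frob_inner_eigen using frob_inner_term_le_gap[OF W Wb b1] by (intro sum_mono) auto
  also have "\<dots> = nuc_norm A - (\<Sum>k<n. sqrt (lam k) * (coord b k)^2) / 2"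
    unfolding nuc_norm_eq by (simp add: algebra_simps sum_subtractf sum_divide_distrib)
  also have "\<dots> \<le> nuc_norm A - sum_sq m (mat_apply A n b) / (2 * spec_norm A)"
    using sum_sq_mat_apply_le_weighted[of b] sp by (simp add: field_simps)
  finally show ?thesis .
qed

text \<open>The polar factor \<open>\<Sum>\<^sub>k \<sigma>\<^sub>k\<^sup>-\<^sup>1 (A u\<^sub>k) u\<^sub>k\<^sup>T\<close> of \<open>A\<close>; since \<open>inverse 0 = 0\<close>, zero singular values drop out.\<close>

definition dual_certificate :: "real mat" where
  "dual_certificate = mat m n (\<lambda>(i,l). \<Sum>k<n. inverse (sqrt (lam k)) * mat_apply A n (u k) i * u k l)"

lemma mat_apply_dual_certificate:
  assumes "i < m"
  shows "mat_apply dual_certificate n x i = (\<Sum>k<n. inverse (sqrt (lam k)) * coord x k * mat_apply A n (u k) i)"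
proof -
  have "mat_apply dual_certificate n x i
      = (\<Sum>l<n. \<Sum>k<n. inverse (sqrt (lam k)) * mat_apply A n (u k) i * (u k l * x l))"
    unfolding mat_apply_def dual_certificate_def using assms
    by (intro sum.cong refl) (simp add: sum_distrib_left sum_distrib_right mult_ac)
  also have "\<dots> = (\<Sum>k<n. \<Sum>l<n. inverse (sqrt (lam k)) * mat_apply A n (u k) i * (u k l * x l))"
    by (rule sum.swap)
  finally show ?thesis unfolding coord_def by (simp add: sum_distrib_left mult_ac)
qed

lemma dual_certificate_contraction: "contraction dual_certificate m n"
  unfolding contraction_def
proof
  fix x
  have "sum_sq m (mat_apply dual_certificate n x) = (\<Sum>k<n. (inverse (sqrt (lam k)) * coord x k)^2 * lam k)"
    unfolding sum_sq_def mat_apply_dual_certificate[symmetric, of _ x, unfolded mat_apply_def]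
    by (subst sum_sq_combination[symmetric])
      (intro sum.cong refl, simp add: mat_apply_dual_certificate mult.assoc)
  also have "\<dots> \<le> (\<Sum>k<n. (coord x k)^2)"
  proof (intro sum_mono)
    fix k assume "k \<in> {..<n}"
    then have "0 \<le> lam k" using lam_nonneg by simp
    then have "(inverse (sqrt (lam k)) * coord x k)^2 * lam k = (inverse (lam k) * lam k) * (coord x k)^2"
      by (simp add: power_mult_distrib power_inverse)
    also have "\<dots> \<le> 1 * (coord x k)^2" by (intro mult_right_mono) (cases "lam k = 0", auto)
    finally show "(inverse (sqrt (lam k)) * coord x k)^2 * lam k \<le> (coord x k)^2" by simp
  qed
  also have "\<dots> = sum_sq n x" by (simp add: parseval)
  finally show "sum_sq m (mat_apply dual_certificate n x) \<le> sum_sq n x" .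
qed

lemma frob_inner_dual_certificate: "frob_inner dual_certificate A m n = nuc_norm A"
proof -
  have Wu: "mat_apply dual_certificate n (u k) i = inverse (sqrt (lam k)) * mat_apply A n (u k) i"
    if "k < n" "i < m" for k i
  proof -
    have "mat_apply dual_certificate n (u k) i
        = (\<Sum>j<n. if j = k then inverse (sqrt (lam k)) * mat_apply A n (u k) i else 0)"
      unfolding mat_apply_dual_certificate[OF \<open>i < m\<close>] using that
      by (intro sum.cong refl) (simp add: coord_def orthonormal)
    then show ?thesis using that by simp
  qed
  have "frob_inner dual_certificate A m n
      = (\<Sum>k<n. inverse (sqrt (lam k)) * (\<Sum>i<m. mat_apply A n (u k) i * mat_apply A n (u k) i))"
    unfolding frob_inner_eigen by (intro sum.cong refl) (simp add: Wu sum_distrib_left mult.assoc)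
  also have "\<dots> = (\<Sum>k<n. sqrt (lam k))"
    using lam_nonneg by (intro sum.cong refl) (simp add: images_orthogonal real_div_sqrt field_simps)
  finally show ?thesis unfolding nuc_norm_eq .
qed

lemma dual_certificate_kernel:
  assumes Ab: "\<forall>i<m. mat_apply A n b i = 0" and i: "i < m"
  shows "mat_apply dual_certificate n b i = 0"
proof -
  have "(\<Sum>k<n. lam k * (coord b k)^2) = 0"
    using Ab unfolding sum_sq_mat_apply[symmetric] sum_sq_def by simp
  then have "lam k * (coord b k)^2 = 0" if "k < n" for k
    using that lam_nonneg by (subst (asm) sum_nonneg_eq_0_iff) auto
  then show ?thesis
    unfolding mat_apply_dual_certificate[OF i] by (intro sum.neutral) auto
qed

end

lemma nuc_spec_norm_of_char_poly:
  fixes lam :: "nat \<Rightarrow> real"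
  assumes cp: "char_poly (transpose_mat A * A) = (\<Prod>k<n. [:- lam k, 1:])"
  shows "nuc_norm A = (\<Sum>k<n. sqrt (lam k))"
    and "spec_norm A = Max (insert 0 ((\<lambda>k. sqrt (lam k)) ` {..<n}))"
proof -
  have eigs: "gram_eigs A = lam ` {..<n}"
    unfolding gram_eigs_def cp by (auto simp: poly_prod)
  have "nuc_norm A = (\<Sum>t\<in>lam ` {..<n}. real (card {k. k < n \<and> lam k = t}) * sqrt t)"
    unfolding nuc_norm_def eigs cp order_prod_linear_factors ..
  also have "\<dots> = (\<Sum>t\<in>lam ` {..<n}. (\<Sum>k\<in>{k\<in>{..<n}. lam k = t}. sqrt (lam k)))"
    by (intro sum.cong refl) auto
  also have "\<dots> = (\<Sum>k<n. sqrt (lam k))"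
    by (rule sum.image_gen[symmetric]) auto
  finally show "nuc_norm A = (\<Sum>k<n. sqrt (lam k))" .
  show "spec_norm A = Max (insert 0 ((\<lambda>k. sqrt (lam k)) ` {..<n}))"
    unfolding spec_norm_def eigs by (simp add: image_image)
qed

lemma gram_eigenbasis_exists:
  assumes A: "A \<in> carrier_mat m n"
  obtains u lam where "gram_eigenbasis A m n u lam"
proof -
  define G where "G = transpose_mat A * A"
  have G: "G \<in> carrier_mat n n" unfolding G_def using A by simp
  have "transpose_mat G = G" unfolding G_def using A by (simp add: transpose_mult)
  then obtain U lam where U: "U \<in> carrier_mat n n" and UU: "transpose_mat U * U = 1\<^sub>m n"
    and UU': "U * transpose_mat U = 1\<^sub>m n"
    and eigen: "\<And>l k. l < n \<Longrightarrow> k < n \<Longrightarrow> (G * U) $$ (l,k) = lam k * U $$ (l,k)"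
    and cp: "char_poly G = (\<Prod>k<n. [:- lam k, 1:])"
    using symmetric_mat_eigen_decomposition[OF G] by blast
  define u where "u k i = U $$ (i,k)" for k i
  have orth: "(\<Sum>i<n. u j i * u k i) = (if j = k then 1 else 0)" if "j < n" "k < n" for j k
    unfolding u_def using orthogonal_mat_col_products[OF U UU that] .
  have compl: "(\<Sum>k<n. u k i * u k l) = (if i = l then 1 else 0)" if "i < n" "l < n" for i l
    unfolding u_def using orthogonal_mat_col_products[of "transpose_mat U" n i l] U UU' that by simp
  have Gu: "(\<Sum>l'<n. (\<Sum>i<m. A $$ (i,l) * A $$ (i,l')) * u k l') = lam k * u k l" if "l < n" "k < n" for l k
  proof -
    have "(G * U) $$ (l,k) = (\<Sum>l'<n. G $$ (l,l') * U $$ (l',k))"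
      using G U that by (intro index_mult_mat_sum) auto
    moreover have "G $$ (l,l') = (\<Sum>i<m. A $$ (i,l) * A $$ (i,l'))" if "l' < n" for l'
      unfolding G_def using A that \<open>l < n\<close> by (subst index_mult_mat_sum[of _ n m _ n]) auto
    ultimately show ?thesis using eigen[OF that] unfolding u_def by simp
  qed
  have img: "(\<Sum>i<m. mat_apply A n (u j) i * mat_apply A n (u k) i) = (if j = k then lam k else 0)"
    if jk: "j < n" "k < n" for j k
  proof -
    have "(\<Sum>i<m. mat_apply A n (u j) i * mat_apply A n (u k) i)
        = (\<Sum>i<m. \<Sum>l<n. \<Sum>l'<n. u j l * (A $$ (i,l) * A $$ (i,l')) * u k l')"
      unfolding mat_apply_def sum_product by (intro sum.cong refl) (simp add: algebra_simps)
    also have "\<dots> = (\<Sum>l<n. \<Sum>l'<n. \<Sum>i<m. u j l * (A $$ (i,l) * A $$ (i,l')) * u k l')"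
      by (subst sum.swap) (simp add: sum.swap[of _ "{..<m}"])
    also have "\<dots> = (\<Sum>l<n. u j l * (\<Sum>l'<n. (\<Sum>i<m. A $$ (i,l) * A $$ (i,l')) * u k l'))"
      by (intro sum.cong refl) (simp add: sum_distrib_left sum_distrib_right algebra_simps)
    also have "\<dots> = lam k * (\<Sum>l<n. u j l * u k l)"
      using Gu jk by (simp add: sum_distrib_left algebra_simps)
    finally show ?thesis using orth jk by simp
  qed
  have "gram_eigenbasis A m n u lam"
    by unfold_locales (use orth compl img nuc_spec_norm_of_char_poly[OF cp[unfolded G_def]] in auto)
  then show ?thesis by (rule that)
qed

lemma nuc_norm_attained:
  assumes "A \<in> carrier_mat m n"
  obtains W where "W \<in> carrier_mat m n" "contraction W m n" "frob_inner W A m n = nuc_norm A"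
    and "\<And>b i. \<forall>i<m. mat_apply A n b i = 0 \<Longrightarrow> i < m \<Longrightarrow> mat_apply W n b i = 0"
proof -
  obtain u lam where "gram_eigenbasis A m n u lam" using gram_eigenbasis_exists[OF assms] .
  then interpret gram_eigenbasis A m n u lam .
  have "dual_certificate \<in> carrier_mat m n" by (simp add: dual_certificate_def)
  with that show ?thesis
    using dual_certificate_contraction frob_inner_dual_certificate dual_certificate_kernel by blast
qed

lemma nuc_norm_ge_frob_inner:
  assumes "A \<in> carrier_mat m n" "contraction W m n"
  shows "frob_inner W A m n \<le> nuc_norm A"
proof -
  obtain u lam where "gram_eigenbasis A m n u lam" using gram_eigenbasis_exists[OF assms(1)] .
  then show ?thesis using gram_eigenbasis.frob_inner_le_nuc_norm assms(2) by blast
qed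

lemma nuc_norm_ge_frob_inner_gap:
  assumes "A \<in> carrier_mat m n" "contraction W m n" "\<forall>i<m. mat_apply W n b i = 0" "sum_sq n b = 1"
    and "spec_norm A > 0"
  shows "frob_inner W A m n \<le> nuc_norm A - sum_sq m (mat_apply A n b) / (2 * spec_norm A)"
proof -
  obtain u lam where "gram_eigenbasis A m n u lam" using gram_eigenbasis_exists[OF assms(1)] .
  then show ?thesis using gram_eigenbasis.frob_inner_le_nuc_norm_gap assms(2-) by blast
qed

lemma sum_sq_mat_apply_le_spec_norm:
  assumes "A \<in> carrier_mat m n"
  shows "sum_sq m (mat_apply A n x) \<le> (spec_norm A)^2 * sum_sq n x"
proof -
  obtain u lam where "gram_eigenbasis A m n u lam" using gram_eigenbasis_exists[OF assms] .
  then show ?thesis by (rule gram_eigenbasis.sum_sq_mat_apply_le)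
qed

lemma spec_norm_nonneg: "spec_norm A \<ge> 0"
proof -
  obtain u lam where "gram_eigenbasis A (dim_row A) (dim_col A) u lam"
    using gram_eigenbasis_exists[of A] by blast
  then show ?thesis by (rule gram_eigenbasis.spec_norm_nonneg)
qed

lemma spec_norm_pos:
  assumes A: "A \<in> carrier_mat m n" and nz: "A \<noteq> 0\<^sub>m m n"
  shows "spec_norm A > 0"
proof -
  obtain i c where ic: "i < m" "c < n" "A $$ (i,c) \<noteq> 0"
    using A nz by (metis carrier_matD eq_matI index_zero_mat)
  let ?e = "\<lambda>l. if l = c then 1 else 0"
  have "(A $$ (i,c))^2 \<le> sum_sq m (mat_apply A n ?e)"
    unfolding sum_sq_def mat_apply_unit(1)[OF ic(2)] using ic by (intro member_le_sum) auto
  also have "\<dots> \<le> (spec_norm A)^2"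
    using sum_sq_mat_apply_le_spec_norm[OF A, of ?e] mat_apply_unit(2)[OF ic(2)] by simp
  finally have "(spec_norm A)^2 > 0" using ic by (meson order_less_le_trans zero_less_power2)
  thus ?thesis using spec_norm_nonneg[of A] by (simp add: less_eq_real_def)
qed

lemma contraction_col_sum_sq_le:
  assumes "contraction W m n" "c < n"
  shows "(\<Sum>i<m. (W $$ (i,c))^2) \<le> 1"
proof -
  let ?e = "\<lambda>l. if l = c then 1 else 0"
  have "(\<Sum>i<m. (W $$ (i,c))^2) = sum_sq m (mat_apply W n ?e)"
    unfolding sum_sq_def mat_apply_unit(1)[OF assms(2)] ..
  also have "\<dots> \<le> sum_sq n ?e" using assms(1) unfolding contraction_def by blast
  finally show ?thesis unfolding mat_apply_unit(2)[OF assms(2)] .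
qed

lemma contraction_right_block:
  assumes W: "contraction W m (p+q)" and s: "s^2 \<le> (1::real)"
  shows "contraction (mat m q (\<lambda>(i,j). s * W $$ (i, p+j))) m q"
  unfolding contraction_def
proof
  fix x :: "nat \<Rightarrow> real"
  define y where "y c = (if c < p then 0 else x (c - p))" for c
  have "mat_apply (mat m q (\<lambda>(i,j). s * W $$ (i, p+j))) q x i = s * mat_apply W (p+q) y i" if "i < m" for i
    unfolding mat_apply_def sum_lessThan_add_split y_def using that by (simp add: sum_distrib_left mult.assoc)
  then have "sum_sq m (mat_apply (mat m q (\<lambda>(i,j). s * W $$ (i, p+j))) q x) = s^2 * sum_sq m (mat_apply W (p+q) y)"
    unfolding sum_sq_def by (simp add: sum_distrib_left power_mult_distrib)
  also have "\<dots> \<le> sum_sq (p+q) y"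
    using s sum_sq_nonneg W unfolding contraction_def by (meson mult_left_le_one_le order_trans zero_le_power2)
  also have "\<dots> = sum_sq q x" unfolding sum_sq_def sum_lessThan_add_split y_def by simp
  finally show "sum_sq m (mat_apply (mat m q (\<lambda>(i,j). s * W $$ (i, p+j))) q x) \<le> sum_sq q x" .
qed

lemma abs_frob_inner_right_block_le:
  assumes W: "contraction W m (p+q)" and B: "B \<in> carrier_mat m q"
  shows "\<bar>\<Sum>i<m. \<Sum>j<q. W $$ (i,p+j) * B $$ (i,j)\<bar> \<le> nuc_norm B"
proof -
  define P where "P = (\<Sum>i<m. \<Sum>j<q. W $$ (i,p+j) * B $$ (i,j))"
  have eq: "frob_inner (mat m q (\<lambda>(i,j). s * W $$ (i, p+j))) B m q = s * P" for s :: real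
    unfolding frob_inner_def P_def by (simp add: sum_distrib_left mult.assoc)
  have "1 * P \<le> nuc_norm B" "-1 * P \<le> nuc_norm B"
    using nuc_norm_ge_frob_inner[OF B contraction_right_block[OF W, of 1]]
      nuc_norm_ge_frob_inner[OF B contraction_right_block[OF W, of "-1"]] unfolding eq by simp_all
  then show ?thesis unfolding P_def by linarith
qed

section \<open>Perturbation bounds for the nuclear norm\<close>

text \<open>Each bound tests a dual certificate of one matrix against the other.\<close>

lemma nuc_norm_le_add_col_norms:
  assumes A: "A \<in> carrier_mat m n" and C: "C \<in> carrier_mat m n"
  shows "nuc_norm A \<le> nuc_norm C + (\<Sum>j<n. sqrt (\<Sum>i<m. (A $$ (i,j) - C $$ (i,j))^2))"
proof -
  obtain W where W: "contraction W m n" and WA: "frob_inner W A m n = nuc_norm A"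
    using nuc_norm_attained[OF A] by blast
  have "frob_inner W A m n = frob_inner W C m n + (\<Sum>j<n. \<Sum>i<m. W $$ (i,j) * (A $$ (i,j) - C $$ (i,j)))"
    unfolding frob_inner_def by (subst sum.swap) (simp add: algebra_simps sum.distrib sum_subtractf)
  also have "\<dots> \<le> nuc_norm C + (\<Sum>j<n. sqrt (\<Sum>i<m. (A $$ (i,j) - C $$ (i,j))^2))"
  proof (intro add_mono sum_mono)
    show "frob_inner W C m n \<le> nuc_norm C" using nuc_norm_ge_frob_inner[OF C W] .
    fix j assume "j \<in> {..<n}"
    then have "sqrt (\<Sum>i<m. (W $$ (i,j))^2) \<le> 1" using contraction_col_sum_sq_le[OF W] by simp
    then show "(\<Sum>i<m. W $$ (i,j) * (A $$ (i,j) - C $$ (i,j))) \<le> sqrt (\<Sum>i<m. (A $$ (i,j) - C $$ (i,j))^2)"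
      using sum_mult_le_sqrt_sum_sq[of "\<lambda>i. W $$ (i,j)" "\<lambda>i. A $$ (i,j) - C $$ (i,j)" "{..<m}"]
      by (smt (verit) mult_left_le_one_le real_sqrt_ge_zero sum_nonneg zero_le_power2)
  qed
  finally show ?thesis using WA by simp
qed

lemma nuc_norm_add_right_block_le:
  assumes A: "A \<in> carrier_mat m (p+q)" and B: "B \<in> carrier_mat m q" and C: "C \<in> carrier_mat m (p+q)"
    and left: "\<And>i l. i < m \<Longrightarrow> l < p \<Longrightarrow> C $$ (i,l) = A $$ (i,l)"
    and right: "\<And>i j. i < m \<Longrightarrow> j < q \<Longrightarrow> C $$ (i,p+j) = A $$ (i,p+j) + c * B $$ (i,j)"
  shows "nuc_norm C \<le> nuc_norm A + \<bar>c\<bar> * nuc_norm B"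
proof -
  obtain W where W: "contraction W m (p+q)" and WC: "frob_inner W C m (p+q) = nuc_norm C"
    using nuc_norm_attained[OF C] by blast
  define P where "P = (\<Sum>i<m. \<Sum>j<q. W $$ (i,p+j) * B $$ (i,j))"
  have "frob_inner W C m (p+q)
      = (\<Sum>i<m. (\<Sum>l<p. W $$ (i,l) * A $$ (i,l)) + (\<Sum>j<q. W $$ (i,p+j) * (A $$ (i,p+j) + c * B $$ (i,j))))"
    unfolding frob_inner_def sum_lessThan_add_split by (intro sum.cong refl) (simp add: left right)
  also have "\<dots> = frob_inner W A m (p+q) + c * P"
    unfolding frob_inner_def P_def sum_lessThan_add_split
    by (simp add: algebra_simps sum.distrib sum_distrib_left)
  also have "\<dots> \<le> nuc_norm A + \<bar>c\<bar> * nuc_norm B"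
  proof (rule add_mono)
    show "frob_inner W A m (p+q) \<le> nuc_norm A" using nuc_norm_ge_frob_inner[OF A W] .
    have "c * P \<le> \<bar>c\<bar> * \<bar>P\<bar>" by (simp add: abs_mult[symmetric])
    also have "\<dots> \<le> \<bar>c\<bar> * nuc_norm B"
      using abs_frob_inner_right_block_le[OF W B] unfolding P_def by (intro mult_left_mono) auto
    finally show "c * P \<le> \<bar>c\<bar> * nuc_norm B" .
  qed
  finally show ?thesis using WC by simp
qed

lemma nuc_norm_add_rank_one_kernel:
  assumes A: "A \<in> carrier_mat m n" and C: "C \<in> carrier_mat m n"
    and Ab: "\<forall>i<m. mat_apply A n b i = 0" and b1: "sum_sq n b = 1"
    and CA: "\<And>i j. i < m \<Longrightarrow> j < n \<Longrightarrow> C $$ (i,j) = A $$ (i,j) + a i * b j"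
    and sp: "spec_norm C > 0"
  shows "nuc_norm A + sum_sq m a / (2 * spec_norm C) \<le> nuc_norm C"
proof -
  obtain W where W: "contraction W m n" and WA: "frob_inner W A m n = nuc_norm A"
    and Wb: "\<forall>i<m. mat_apply W n b i = 0"
    using nuc_norm_attained[OF A] Ab by metis
  have "frob_inner W C m n = frob_inner W A m n + (\<Sum>i<m. a i * mat_apply W n b i)"
    unfolding frob_inner_def mat_apply_def using CA
    by (simp add: algebra_simps sum.distrib sum_distrib_left)
  also have "\<dots> = nuc_norm A" using Wb WA by simp
  finally have "nuc_norm A \<le> nuc_norm C - sum_sq m (mat_apply C n b) / (2 * spec_norm C)"
    using nuc_norm_ge_frob_inner_gap[OF C W Wb b1 sp] by simp
  moreover have "mat_apply C n b i = a i" if "i < m" for i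
  proof -
    have "mat_apply C n b i = mat_apply A n b i + a i * sum_sq n b"
      unfolding mat_apply_def sum_sq_def using CA that
      by (simp add: algebra_simps sum.distrib sum_distrib_left power2_eq_square)
    then show ?thesis using Ab b1 that by simp
  qed
  ultimately show ?thesis unfolding sum_sq_def by simp
qed

lemma vnorm_sq: "(vnorm v)^2 = (\<Sum>i<dim_vec v. (v $ i)^2)"
  unfolding vnorm_def by (simp add: sum_nonneg)

lemma vnorm_nonneg: "vnorm v \<ge> 0"
  unfolding vnorm_def by (simp add: sum_nonneg)

lemma vnorm_pos:
  assumes "v \<in> carrier_vec n" "v \<noteq> 0\<^sub>v n"
  shows "vnorm v > 0"
proof -
  obtain i where "i < n" "v $ i \<noteq> 0" using assms by (metis carrier_vecD eq_vecI index_zero_vec)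
  then show ?thesis unfolding vnorm_def using assms by (auto intro!: sum_pos2)
qed

lemma index_mult_mat_vec_sum:
  "A \<in> carrier_mat a b \<Longrightarrow> z \<in> carrier_vec b \<Longrightarrow> i < a \<Longrightarrow> (A *\<^sub>v z) $ i = (\<Sum>c<b. A $$ (i,c) * z $ c)"
  by (auto simp: scalar_prod_def lessThan_atLeast0 intro!: sum.cong)

lemma vnorm_mult_mat_vec_le:
  assumes A: "A \<in> carrier_mat m n" and v: "v \<in> carrier_vec n"
  shows "vnorm (A *\<^sub>v v) \<le> spec_norm A * vnorm v"
proof -
  have "(vnorm (A *\<^sub>v v))^2 = (\<Sum>i<m. ((A *\<^sub>v v) $ i)^2)"
    unfolding vnorm_sq using A by simp
  also have "\<dots> = sum_sq m (mat_apply A n (\<lambda>j. v $ j))"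
    unfolding sum_sq_def mat_apply_def using A v by (intro sum.cong refl, subst index_mult_mat_vec_sum[OF A v]) auto
  also have "\<dots> \<le> (spec_norm A * vnorm v)^2"
    using sum_sq_mat_apply_le_spec_norm[OF A] v by (simp add: power_mult_distrib vnorm_sq sum_sq_def)
  finally show ?thesis
    using spec_norm_nonneg[of A] vnorm_nonneg[of v] by (simp add: power2_le_iff_abs_le)
qed

lemma vnorm_diff_sq_ge:
  assumes "a \<in> carrier_vec n" "b \<in> carrier_vec n"
  shows "(vnorm (a - b))^2 \<ge> (vnorm a)^2 - 2 * vnorm a * vnorm b"
proof -
  have "(vnorm (a - b))^2 = (vnorm a)^2 - 2 * (\<Sum>i<n. a $ i * b $ i) + (vnorm b)^2"
    using assms unfolding vnorm_sq
    by (simp add: power2_diff sum.distrib sum_subtractf sum_distrib_left mult.assoc)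
  moreover have "(\<Sum>i<n. a $ i * b $ i) \<le> vnorm a * vnorm b"
    using assms sum_mult_le_sqrt_sum_sq[of "\<lambda>i. a $ i" "\<lambda>i. b $ i" "{..<n}"] unfolding vnorm_def by simp
  ultimately show ?thesis using zero_le_power2[of "vnorm b"] by linarith
qed

lemma vnorm_append_diff_sq:
  assumes "a \<in> carrier_vec p" "c \<in> carrier_vec p" "b \<in> carrier_vec q" "e \<in> carrier_vec q"
  shows "(vnorm ((a @\<^sub>v b) - (c @\<^sub>v e)))^2 = (vnorm (a - c))^2 + (vnorm (b - e))^2"
  using assms unfolding vnorm_sq by (simp add: sum_lessThan_add_split)

lemma index_mult_Diag:
  assumes A: "A \<in> carrier_mat a b" and z: "z \<in> carrier_vec b" and "i < a" "c < b"
  shows "(A * Diag z) $$ (i,c) = A $$ (i,c) * z $ c"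
proof -
  have "Diag z \<in> carrier_mat b b" using z unfolding Diag_def by auto
  then have "(A * Diag z) $$ (i,c) = (\<Sum>k<b. A $$ (i,k) * Diag z $$ (k,c))"
    using assms by (intro index_mult_mat_sum) auto
  also have "\<dots> = (\<Sum>k<b. if k = c then A $$ (i,c) * z $ c else 0)"
    using assms by (intro sum.cong refl) (auto simp: Diag_def)
  finally show ?thesis using assms by simp
qed

lemma hcat_carrier: "A \<in> carrier_mat a b1 \<Longrightarrow> B \<in> carrier_mat a b2 \<Longrightarrow> hcat A B \<in> carrier_mat a (b1 + b2)"
  unfolding hcat_def by auto

lemma index_hcat:
  "A \<in> carrier_mat a b1 \<Longrightarrow> B \<in> carrier_mat a b2 \<Longrightarrow> i < a \<Longrightarrow> c < b1 + b2 \<Longrightarrow>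
   hcat A B $$ (i,c) = (if c < b1 then A $$ (i,c) else B $$ (i, c - b1))"
  unfolding hcat_def by auto

lemma ones_carrier [simp]: "ones q \<in> carrier_vec q" and dim_ones [simp]: "dim_vec (ones q) = q"
  and index_ones [simp]: "j < q \<Longrightarrow> ones q $ j = 1"
  unfolding ones_def by auto

lemma outer_carrier: "u \<in> carrier_vec m \<Longrightarrow> v \<in> carrier_vec n \<Longrightarrow> outer u v \<in> carrier_mat m n"
  unfolding outer_def by auto

lemma index_outer: "i < dim_vec u \<Longrightarrow> j < dim_vec v \<Longrightarrow> outer u v $$ (i,j) = u $ i * v $ j"
  unfolding outer_def by simp

lemma sum_shift_sq_diff:
  fixes y w :: "real vec"
  shows "(\<Sum>j<q. (y $ j - c) * (y $ j + c - 2 * w $ j)) = (\<Sum>j<q. (y $ j - w $ j)^2) - (\<Sum>j<q. (c - w $ j)^2)"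
  unfolding sum_subtractf[symmetric] by (intro sum.cong refl) (simp add: power2_eq_square algebra_simps)

text \<open>\<open>y\<^sup>*\<close> is the projection of \<open>w\<close> onto the hyperplane \<open>y \<bullet> 1 = q z\<close>, which contains both
  \<open>z\<close> and its mean vector.\<close>

lemma hyperplane_projection_gap:
  fixes z w ystar :: "real vec" and q :: nat
  defines "zbar \<equiv> (ones q \<bullet> z) / real q"
  assumes z: "z \<in> carrier_vec q" and w: "w \<in> carrier_vec q" and q: "q \<ge> 1"
    and ystar_opt: "\<And>y. y \<in> carrier_vec q \<Longrightarrow> y \<bullet> ones q = real q * zbar
      \<Longrightarrow> (vnorm (ystar - w))^2 \<le> (vnorm (y - w))^2"
    and ystar: "ystar \<in> carrier_vec q"
  shows "(\<Sum>j<q. (ystar $ j - zbar) * (ystar $ j + zbar - 2 * w $ j)) \<le> 0"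
    and "(\<Sum>j<q. (ystar $ j - zbar) * (ystar $ j + zbar - 2 * w $ j))
      \<le> (vnorm (z - w))^2 - (vnorm (zbar \<cdot>\<^sub>v ones q - w))^2"
proof -
  have "ones q \<bullet> ones q = real q" unfolding scalar_prod_def by simp
  then have "(zbar \<cdot>\<^sub>v ones q) \<bullet> ones q = real q * zbar" by simp
  then have "(vnorm (ystar - w))^2 \<le> (vnorm (zbar \<cdot>\<^sub>v ones q - w))^2"
    using ystar_opt[of "zbar \<cdot>\<^sub>v ones q"] by simp
  moreover have "z \<bullet> ones q = real q * zbar"
    using q comm_scalar_prod[OF z ones_carrier] unfolding zbar_def by simp
  then have "(vnorm (ystar - w))^2 \<le> (vnorm (z - w))^2" using ystar_opt[OF z] by simp
  moreover have "(vnorm (zbar \<cdot>\<^sub>v ones q - w))^2 = (\<Sum>j<q. (zbar - w $ j)^2)"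
    using w unfolding vnorm_sq by (auto intro!: sum.cong)
  moreover have "(vnorm (ystar - w))^2 = (\<Sum>j<q. (ystar $ j - w $ j)^2)"
    using w ystar unfolding vnorm_sq by simp
  ultimately show "(\<Sum>j<q. (ystar $ j - zbar) * (ystar $ j + zbar - 2 * w $ j)) \<le> 0"
    and "(\<Sum>j<q. (ystar $ j - zbar) * (ystar $ j + zbar - 2 * w $ j))
      \<le> (vnorm (z - w))^2 - (vnorm (zbar \<cdot>\<^sub>v ones q - w))^2"
    unfolding sum_shift_sq_diff by linarith+
qed

section \<open>Replacing a group of columns by its mean\<close>

text \<open>Notation of the paper: \<open>Xh, Xt, zh, zt\<close> are \<open>X_hat, X_tilde, z_hat, z_tilde\<close>, \<open>xbar\<close> is \<open>x\<^sub>0\<close>,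
  \<open>Xdev = X_tilde - x\<^sub>0 1\<^sup>T\<close>, and \<open>M\<close> is the matrix of the theorem.\<close>

locale column_group =
  fixes d p q :: nat and Xh Xt :: "real mat" and zh zt :: "real vec"
  assumes Xh: "Xh \<in> carrier_mat d p" and Xt: "Xt \<in> carrier_mat d q"
    and zh: "zh \<in> carrier_vec p" and zt: "zt \<in> carrier_vec q" and q_pos: "q \<ge> 1"
begin

definition xbar :: "real vec" where
  "xbar = (1 / real q) \<cdot>\<^sub>v (Xt *\<^sub>v ones q)"

definition zbar :: real where
  "zbar = (ones q \<bullet> zt) / real q"

definition Xdev :: "real mat" where
  "Xdev = Xt - outer xbar (ones q)"

definition zdev :: "real vec" where
  "zdev = zt - zbar \<cdot>\<^sub>v ones q"

definition M :: "real mat" where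
  "M = hcat (Xh * Diag zh) (outer xbar zt)"

definition Mbar :: "real mat" where
  "Mbar = hcat (Xh * Diag zh) (outer xbar (zbar \<cdot>\<^sub>v ones q))"

lemma xbar_carrier: "xbar \<in> carrier_vec d"
  unfolding xbar_def using Xt by simp

lemma zdev_carrier: "zdev \<in> carrier_vec q"
  unfolding zdev_def using zt by simp

lemma Xdev_carrier: "Xdev \<in> carrier_mat d q"
  unfolding Xdev_def using outer_carrier[OF xbar_carrier ones_carrier[of q]] by (rule minus_carrier_mat)

lemma index_Xdev: "i < d \<Longrightarrow> j < q \<Longrightarrow> Xdev $$ (i,j) = Xt $$ (i,j) - xbar $ i"
  unfolding Xdev_def using Xt xbar_carrier by (simp add: outer_def)

lemma index_zdev: "j < q \<Longrightarrow> zdev $ j = zt $ j - zbar"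
  unfolding zdev_def using zt by simp

lemma sum_zdev: "(\<Sum>j<q. zdev $ j) = 0"
proof -
  have "zbar = (\<Sum>j<q. zt $ j) / real q"
    unfolding zbar_def scalar_prod_def using zt by (simp add: lessThan_atLeast0)
  then show ?thesis using q_pos by (simp add: index_zdev sum_subtractf)
qed

lemma sum_zt_zdev: "(\<Sum>j<q. zt $ j * zdev $ j) = (vnorm zdev)^2"
proof -
  have "(\<Sum>j<q. zt $ j * zdev $ j) = (\<Sum>j<q. (zdev $ j)^2 + zbar * zdev $ j)"
    by (intro sum.cong refl) (simp add: index_zdev power2_eq_square algebra_simps)
  also have "\<dots> = (\<Sum>j<q. (zdev $ j)^2) + zbar * (\<Sum>j<q. zdev $ j)"
    by (simp add: sum.distrib sum_distrib_left)
  finally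
  show ?thesis using sum_zdev zdev_carrier unfolding vnorm_sq by simp
qed

lemma vnorm_zdev_le: "vnorm zdev \<le> vnorm zt"
proof (rule ccontr)
  assume "\<not> vnorm zdev \<le> vnorm zt"
  then have "vnorm zt * vnorm zdev < vnorm zdev * vnorm zdev"
    using vnorm_nonneg[of zt] by (intro mult_strict_right_mono) auto
  moreover have "(\<Sum>j<q. zt $ j * zdev $ j) \<le> vnorm zt * vnorm zdev"
    unfolding vnorm_def using sum_mult_le_sqrt_sum_sq[of "\<lambda>j. zt $ j" "\<lambda>j. zdev $ j" "{..<q}"] zt zdev_carrier
    by simp
  ultimately show False unfolding sum_zt_zdev by (simp add: power2_eq_square)
qed

lemma index_hcat_Diag:
  assumes z: "z \<in> carrier_vec q" and i: "i < d"
  shows "l < p \<Longrightarrow> (hcat Xh Xt * Diag (zh @\<^sub>v z)) $$ (i,l) = Xh $$ (i,l) * zh $ l"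
    and "j < q \<Longrightarrow> (hcat Xh Xt * Diag (zh @\<^sub>v z)) $$ (i,p+j) = Xt $$ (i,j) * z $ j"
  using index_mult_Diag[OF hcat_carrier[OF Xh Xt], of "zh @\<^sub>v z" i] index_hcat[OF Xh Xt i] zh z i
  by (auto simp del: index_mult_mat)

lemma hcat_Diag_carrier: "z \<in> carrier_vec q \<Longrightarrow> hcat Xh Xt * Diag (zh @\<^sub>v z) \<in> carrier_mat d (p+q)"
  using hcat_carrier[OF Xh Xt] zh by (simp add: Diag_def)

lemma Xh_Diag_carrier: "Xh * Diag zh \<in> carrier_mat d p"
  using Xh zh by (simp add: Diag_def)

lemma M_carrier: "M \<in> carrier_mat d (p+q)" and Mbar_carrier: "Mbar \<in> carrier_mat d (p+q)"
  unfolding M_def Mbar_def using Xh_Diag_carrier xbar_carrier zt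
  by (auto intro!: hcat_carrier outer_carrier)

lemma index_M:
  assumes "i < d"
  shows "l < p \<Longrightarrow> M $$ (i,l) = Xh $$ (i,l) * zh $ l"
    and "j < q \<Longrightarrow> M $$ (i,p+j) = xbar $ i * zt $ j"
  unfolding M_def using assms Xh zh xbar_carrier zt Xh_Diag_carrier
  by (auto simp: index_hcat[of _ d p _ q] index_mult_Diag index_outer outer_carrier simp del: index_mult_mat)

lemma index_Mbar:
  assumes "i < d"
  shows "l < p \<Longrightarrow> Mbar $$ (i,l) = Xh $$ (i,l) * zh $ l"
    and "j < q \<Longrightarrow> Mbar $$ (i,p+j) = xbar $ i * zbar"
  unfolding Mbar_def using assms Xh zh xbar_carrier Xh_Diag_carrier
  by (auto simp: index_hcat[of _ d p _ q] index_mult_Diag index_outer outer_carrier simp del: index_mult_mat)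

lemma nuc_norm_M_le:
  "nuc_norm M \<le> nuc_norm (hcat Xh Xt * Diag (zh @\<^sub>v zt)) + vnorm zt * frob_norm Xdev"
proof -
  let ?B = "hcat Xh Xt * Diag (zh @\<^sub>v zt)"
  let ?colnorm = "\<lambda>c. sqrt (\<Sum>i<d. (M $$ (i,c) - ?B $$ (i,c))^2)"
  have "?colnorm l = 0" if "l < p" for l
    using that by (simp add: index_M index_hcat_Diag[OF zt])
  moreover have "?colnorm (p+j) = \<bar>zt $ j\<bar> * sqrt (\<Sum>i<d. (Xdev $$ (i,j))^2)" if "j < q" for j
  proof -
    have "(\<Sum>i<d. (M $$ (i,p+j) - ?B $$ (i,p+j))^2) = (\<Sum>i<d. (zt $ j)^2 * (Xdev $$ (i,j))^2)"
    proof (intro sum.cong refl)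
      fix i assume "i \<in> {..<d}"
      then show "(M $$ (i,p+j) - ?B $$ (i,p+j))^2 = (zt $ j)^2 * (Xdev $$ (i,j))^2"
        using that by (simp add: index_M index_hcat_Diag[OF zt] index_Xdev) (simp add: power2_eq_square algebra_simps)
    qed
    then have "(\<Sum>i<d. (M $$ (i,p+j) - ?B $$ (i,p+j))^2) = (zt $ j)^2 * (\<Sum>i<d. (Xdev $$ (i,j))^2)"
      by (simp add: sum_distrib_left)
    then show ?thesis by (simp add: real_sqrt_mult)
  qed
  ultimately have "(\<Sum>c<p+q. ?colnorm c) = (\<Sum>j<q. \<bar>zt $ j\<bar> * sqrt (\<Sum>i<d. (Xdev $$ (i,j))^2))"
    unfolding sum_lessThan_add_split by simp
  also have "\<dots> \<le> sqrt (\<Sum>j<q. \<bar>zt $ j\<bar>^2) * sqrt (\<Sum>j<q. (sqrt (\<Sum>i<d. (Xdev $$ (i,j))^2))^2)"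
    by (rule sum_mult_le_sqrt_sum_sq)
  also have "\<dots> = vnorm zt * frob_norm Xdev"
    using zt Xdev_carrier unfolding vnorm_def frob_norm_def by (simp add: sum_nonneg sum.swap[of _ "{..<d}"])
  finally show ?thesis
    using nuc_norm_le_add_col_norms[OF M_carrier hcat_Diag_carrier[OF zt]] by linarith
qed

lemma nuc_norm_averaged_le:
  "nuc_norm (hcat Xh Xt * Diag (zh @\<^sub>v (zbar \<cdot>\<^sub>v ones q))) \<le> nuc_norm Mbar + \<bar>zbar\<bar> * nuc_norm Xdev"
proof (rule nuc_norm_add_right_block_le[OF Mbar_carrier Xdev_carrier hcat_Diag_carrier])
  show "zbar \<cdot>\<^sub>v ones q \<in> carrier_vec q" by simp
  fix i assume "i < d"
  then show "\<And>l. l < p \<Longrightarrow> (hcat Xh Xt * Diag (zh @\<^sub>v (zbar \<cdot>\<^sub>v ones q))) $$ (i,l) = Mbar $$ (i,l)"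
    and "\<And>j. j < q \<Longrightarrow> (hcat Xh Xt * Diag (zh @\<^sub>v (zbar \<cdot>\<^sub>v ones q))) $$ (i,p+j)
      = Mbar $$ (i,p+j) + zbar * Xdev $$ (i,j)"
    by (simp_all add: index_hcat_Diag index_Mbar index_Xdev right_diff_distrib mult.commute)
qed

text \<open>\<open>M\<close> differs from \<open>Mbar\<close> by the rank-one matrix \<open>x\<^sub>0 (z\<^sub>dev)\<^sup>T\<close> placed in the last \<open>q\<close>
  columns, whose row space direction is annihilated by \<open>Mbar\<close> because \<open>z\<^sub>dev \<bottom> 1\<close>.\<close>

lemma nuc_norm_Mbar_le:
  assumes "vnorm zdev > 0" and "spec_norm M > 0"
  shows "nuc_norm Mbar + (vnorm zdev)^2 * (vnorm xbar)^2 / (2 * spec_norm M) \<le> nuc_norm M"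
proof -
  define b where "b c = (if c < p then 0 else zdev $ (c - p) / vnorm zdev)" for c
  have "(\<Sum>j<q. (zdev $ j)^2) = (vnorm zdev)^2" using zdev_carrier vnorm_sq[of zdev] by simp
  then have b1: "sum_sq (p+q) b = 1"
    unfolding sum_sq_def sum_lessThan_add_split b_def using assms(1)
    by (simp add: power_divide sum_divide_distrib[symmetric])
  have "mat_apply Mbar (p+q) b i = xbar $ i * zbar * (\<Sum>j<q. zdev $ j) / vnorm zdev" if "i < d" for i
    unfolding mat_apply_def sum_lessThan_add_split b_def using that
    by (simp add: index_Mbar sum_distrib_left sum_divide_distrib)
  then have Mbar_b: "\<forall>i<d. mat_apply Mbar (p+q) b i = 0" by (simp add: sum_zdev)
  have "M $$ (i,c) = Mbar $$ (i,c) + vnorm zdev * xbar $ i * b c" if i: "i < d" and c: "c < p+q" for i c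
  proof (cases "c < p")
    case False
    then obtain j where "c = p + j" "j < q" using c by (metis add_diff_inverse_nat add_less_cancel_left)
    then show ?thesis using i assms(1) by (simp add: index_M index_Mbar index_zdev b_def) (simp add: field_simps)
  qed (simp add: index_M index_Mbar b_def i)
  then have "nuc_norm Mbar + sum_sq d (\<lambda>i. vnorm zdev * xbar $ i) / (2 * spec_norm M) \<le> nuc_norm M"
    by (rule nuc_norm_add_rank_one_kernel[OF Mbar_carrier M_carrier Mbar_b b1 _ assms(2),
          where a = "\<lambda>i. vnorm zdev * xbar $ i"])
  moreover have "sum_sq d (\<lambda>i. vnorm zdev * xbar $ i) = (vnorm zdev)^2 * (vnorm xbar)^2"
    unfolding sum_sq_def vnorm_sq[of xbar] using xbar_carrier by (simp add: power_mult_distrib sum_distrib_left)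
  ultimately show ?thesis by simp
qed

lemma mult_hcat_append:
  assumes z: "z \<in> carrier_vec q"
  shows "hcat Xh Xt *\<^sub>v (zh @\<^sub>v z) = Xh *\<^sub>v zh + Xt *\<^sub>v z"
proof (rule eq_vecI)
  fix i assume "i < dim_vec (Xh *\<^sub>v zh + Xt *\<^sub>v z)"
  then have i: "i < d" using Xt by simp
  have "(hcat Xh Xt *\<^sub>v (zh @\<^sub>v z)) $ i = (\<Sum>c<p+q. hcat Xh Xt $$ (i,c) * (zh @\<^sub>v z) $ c)"
    using i zh z by (intro index_mult_mat_vec_sum[OF hcat_carrier[OF Xh Xt]]) auto
  also have "\<dots> = (\<Sum>l<p. Xh $$ (i,l) * zh $ l) + (\<Sum>j<q. Xt $$ (i,j) * z $ j)"
    unfolding sum_lessThan_add_split using i zh z by (simp add: index_hcat[OF Xh Xt])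
  also have "\<dots> = (Xh *\<^sub>v zh + Xt *\<^sub>v z) $ i"
    using i Xh Xt by (simp add: index_mult_mat_vec_sum[OF Xh zh i] index_mult_mat_vec_sum[OF Xt z i]
        del: index_mult_mat_vec)
  finally show "(hcat Xh Xt *\<^sub>v (zh @\<^sub>v z)) $ i = (Xh *\<^sub>v zh + Xt *\<^sub>v z) $ i" .
qed (use Xh Xt in \<open>simp add: hcat_def\<close>)

lemma Xdev_mult_zdev: "Xdev *\<^sub>v zdev = Xt *\<^sub>v zt - Xt *\<^sub>v (zbar \<cdot>\<^sub>v ones q)"
proof (rule eq_vecI)
  fix i assume "i < dim_vec (Xt *\<^sub>v zt - Xt *\<^sub>v (zbar \<cdot>\<^sub>v ones q))"
  then have i: "i < d" using Xt by simp
  have "(Xdev *\<^sub>v zdev) $ i = (\<Sum>j<q. (Xt $$ (i,j) - xbar $ i) * zdev $ j)"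
    unfolding index_mult_mat_vec_sum[OF Xdev_carrier zdev_carrier i] using i
    by (intro sum.cong refl) (simp add: index_Xdev)
  also have "\<dots> = (\<Sum>j<q. Xt $$ (i,j) * zdev $ j) - xbar $ i * (\<Sum>j<q. zdev $ j)"
    by (simp add: left_diff_distrib sum_subtractf sum_distrib_left)
  also have "\<dots> = (\<Sum>j<q. Xt $$ (i,j) * zt $ j - Xt $$ (i,j) * (zbar \<cdot>\<^sub>v ones q) $ j)"
    unfolding sum_zdev by (simp, intro sum.cong refl) (simp add: index_zdev right_diff_distrib)
  also have "\<dots> = (Xt *\<^sub>v zt - Xt *\<^sub>v (zbar \<cdot>\<^sub>v ones q)) $ i"
    using i Xt zt by (simp add: sum_subtractf index_mult_mat_vec_sum[OF Xt _ i] del: index_mult_mat_vec)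
  finally show "(Xdev *\<^sub>v zdev) $ i = (Xt *\<^sub>v zt - Xt *\<^sub>v (zbar \<cdot>\<^sub>v ones q)) $ i" .
qed (use Xt Xdev_carrier in simp)

lemma obj_gap:
  fixes x wh wt ystar :: "real vec" and \<alpha>1 \<alpha>2 \<epsilon> :: real
  defines "r \<equiv> x - Xh *\<^sub>v zh - Xt *\<^sub>v (zbar \<cdot>\<^sub>v ones q)"
    and "S \<equiv> \<Sum>j<q. (ystar $ j - zbar) * (ystar $ j + zbar - 2 * wt $ j)"
  assumes x: "x \<in> carrier_vec d" and wh: "wh \<in> carrier_vec p" and wt: "wt \<in> carrier_vec q"
    and a1: "\<alpha>1 \<ge> 0" and a2: "\<alpha>2 \<ge> 0"
    and nuc: "nuc_norm Xdev \<le> \<epsilon>" and frob: "frob_norm Xdev \<le> \<epsilon>" and spec: "spec_norm Xdev \<le> \<epsilon>"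
    and ystar: "ystar \<in> carrier_vec q"
    and ystar_opt: "\<And>y. y \<in> carrier_vec q \<Longrightarrow> y \<bullet> ones q = real q * zbar
      \<Longrightarrow> (vnorm (ystar - wt))^2 \<le> (vnorm (y - wt))^2"
    and zdev_pos: "vnorm zdev > 0" and M_pos: "spec_norm M > 0"
  shows "obj x (hcat Xh Xt) \<alpha>1 \<alpha>2 (wh @\<^sub>v wt) (zh @\<^sub>v zt)
      - obj x (hcat Xh Xt) \<alpha>1 \<alpha>2 (wh @\<^sub>v wt) (zh @\<^sub>v (zbar \<cdot>\<^sub>v ones q))
    \<ge> \<alpha>1 * (vnorm zdev)^2 * (vnorm xbar)^2 / (2 * spec_norm M)
      - ((\<alpha>1 + vnorm r) * vnorm zt + \<alpha>1 * \<bar>zbar\<bar>) * \<epsilon> + \<alpha>2 * S / 2"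
proof -
  let ?z = "zbar \<cdot>\<^sub>v ones q"
  have z: "?z \<in> carrier_vec q" by simp
  have r: "r \<in> carrier_vec d" unfolding r_def using x Xh zh Xt by simp
  have Xdz: "Xdev *\<^sub>v zdev \<in> carrier_vec d" using Xdev_carrier zdev_carrier by simp
  have res_merged: "x - hcat Xh Xt *\<^sub>v (zh @\<^sub>v ?z) = r"
    unfolding mult_hcat_append[OF z] r_def by (rule eq_vecI) (use x Xh zh Xt in auto)
  have "x - hcat Xh Xt *\<^sub>v (zh @\<^sub>v zt) = r - Xdev *\<^sub>v zdev"
    unfolding mult_hcat_append[OF zt] Xdev_mult_zdev r_def by (rule eq_vecI) (use x Xh zh Xt zt in auto)
  moreover have "vnorm (Xdev *\<^sub>v zdev) \<le> \<epsilon> * vnorm zt"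
    using vnorm_mult_mat_vec_le[OF Xdev_carrier zdev_carrier] spec vnorm_zdev_le
      spec_norm_nonneg[of Xdev] vnorm_nonneg[of zdev] by (meson mult_mono order_trans)
  ultimately have quad: "(vnorm (x - hcat Xh Xt *\<^sub>v (zh @\<^sub>v zt)))^2 \<ge> (vnorm r)^2 - 2 * vnorm r * (\<epsilon> * vnorm zt)"
    using vnorm_diff_sq_ge[OF r Xdz] vnorm_nonneg[of r] by (smt (verit) mult_left_mono)
  have nuc_gap: "nuc_norm (hcat Xh Xt * Diag (zh @\<^sub>v zt)) - nuc_norm (hcat Xh Xt * Diag (zh @\<^sub>v ?z))
      \<ge> (vnorm zdev)^2 * (vnorm xbar)^2 / (2 * spec_norm M) - (vnorm zt + \<bar>zbar\<bar>) * \<epsilon>"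
    using nuc_norm_M_le nuc_norm_averaged_le nuc_norm_Mbar_le[OF zdev_pos M_pos]
      mult_left_mono[OF frob vnorm_nonneg[of zt]] mult_left_mono[OF nuc abs_ge_zero[of zbar]]
    by (simp add: algebra_simps)
  have ridge: "(vnorm ((zh @\<^sub>v zt) - (wh @\<^sub>v wt)))^2 - (vnorm ((zh @\<^sub>v ?z) - (wh @\<^sub>v wt)))^2 \<ge> S"
    using hyperplane_projection_gap(2)[OF zt wt q_pos ystar_opt[unfolded zbar_def] ystar]
    unfolding S_def vnorm_append_diff_sq[OF zh wh zt wt] vnorm_append_diff_sq[OF zh wh z wt]
      zbar_def[symmetric] by simp
  show ?thesis
    unfolding obj_def res_merged
    using mult_left_mono[OF nuc_gap a1] mult_left_mono[OF ridge a2] quad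
    by (simp add: algebra_simps)
qed

lemma obj_decrease:
  fixes x wh wt ystar :: "real vec" and \<alpha>1 \<alpha>2 \<epsilon> :: real
  defines "\<gamma> \<equiv> ((\<alpha>1 + vnorm (x - Xh *\<^sub>v zh - Xt *\<^sub>v (zbar \<cdot>\<^sub>v ones q))) * vnorm zt + \<alpha>1 * \<bar>zbar\<bar>) * \<epsilon>"
    and "S \<equiv> \<Sum>j<q. (ystar $ j - zbar) * (ystar $ j + zbar - 2 * wt $ j)"
  assumes x: "x \<in> carrier_vec d" and wh: "wh \<in> carrier_vec p" and wt: "wt \<in> carrier_vec q"
    and a1: "\<alpha>1 > 0" and a2: "\<alpha>2 \<ge> 0" and eps: "\<epsilon> \<ge> 0"
    and nuc: "nuc_norm Xdev \<le> \<epsilon>" and frob: "frob_norm Xdev \<le> \<epsilon>" and spec: "spec_norm Xdev \<le> \<epsilon>"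
    and ystar: "ystar \<in> carrier_vec q"
    and ystar_opt: "\<And>y. y \<in> carrier_vec q \<Longrightarrow> y \<bullet> ones q = real q * zbar
      \<Longrightarrow> (vnorm (ystar - wt))^2 \<le> (vnorm (y - wt))^2"
    and xbar_nz: "xbar \<noteq> 0\<^sub>v d" and M_nz: "M \<noteq> 0\<^sub>m d (p+q)"
    and gt: "vnorm zdev > sqrt ((2 * \<gamma> - \<alpha>2 * S) * spec_norm M / (\<alpha>1 * (vnorm xbar)^2))"
  shows "obj x (hcat Xh Xt) \<alpha>1 \<alpha>2 (wh @\<^sub>v wt) (zh @\<^sub>v zt)
    > obj x (hcat Xh Xt) \<alpha>1 \<alpha>2 (wh @\<^sub>v wt) (zh @\<^sub>v (zbar \<cdot>\<^sub>v ones q))"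
proof -
  have "S \<le> 0"
    unfolding S_def zbar_def using hyperplane_projection_gap(1)[OF zt wt q_pos ystar_opt[unfolded zbar_def] ystar] .
  then have "\<alpha>2 * S \<le> 0" using a2 by (simp add: mult_nonneg_nonpos)
  moreover have "\<gamma> \<ge> 0"
    unfolding \<gamma>_def using a1 eps vnorm_nonneg[of zt] vnorm_nonneg[of "x - Xh *\<^sub>v zh - Xt *\<^sub>v (zbar \<cdot>\<^sub>v ones q)"]
    by simp
  ultimately have c: "2 * \<gamma> - \<alpha>2 * S \<ge> 0" by linarith
  have M_pos: "spec_norm M > 0" using spec_norm_pos[OF M_carrier M_nz] .
  have N_pos: "(vnorm xbar)^2 > 0" using vnorm_pos[OF xbar_carrier xbar_nz] by simp
  have "0 \<le> (2 * \<gamma> - \<alpha>2 * S) * spec_norm M / (\<alpha>1 * (vnorm xbar)^2)"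
    using c M_pos N_pos a1 by simp
  then have "vnorm zdev > 0" using gt by (meson order_le_less_trans real_sqrt_ge_zero)
  with obj_gap[OF x wh wt less_imp_le[OF a1] a2 nuc frob spec ystar _ _ M_pos] ystar_opt
  have "obj x (hcat Xh Xt) \<alpha>1 \<alpha>2 (wh @\<^sub>v wt) (zh @\<^sub>v zt) - obj x (hcat Xh Xt) \<alpha>1 \<alpha>2 (wh @\<^sub>v wt) (zh @\<^sub>v (zbar \<cdot>\<^sub>v ones q))
      \<ge> \<alpha>1 * (vnorm zdev)^2 * (vnorm xbar)^2 / (2 * spec_norm M) - (2 * \<gamma> - \<alpha>2 * S) / 2"
    unfolding \<gamma>_def S_def by (simp add: diff_divide_distrib)
  from pos_of_gt_sqrt_threshold[OF a1 M_pos N_pos c gt this] show ?thesis by simp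
qed

end

theorem theorem1:
  fixes d p q :: nat
    and x :: "real vec" and Xh Xt :: "real mat"
    and wh wt zh zt ystar :: "real vec"
    and \<alpha>1 \<alpha>2 \<epsilon> :: real
  assumes x_dim: "x \<in> carrier_vec d"
    and Xh_dim: "Xh \<in> carrier_mat d p" and Xt_dim: "Xt \<in> carrier_mat d q"
    and wh_dim: "wh \<in> carrier_vec p" and wt_dim: "wt \<in> carrier_vec q"
    and zh_dim: "zh \<in> carrier_vec p" and zt_dim: "zt \<in> carrier_vec q"
    and q_pos: "q \<ge> 1"
    and a1: "\<alpha>1 > 0" and a2: "\<alpha>2 \<ge> 0"
    and eps_nonneg: "\<epsilon> \<ge> 0"
    and eps_nuc: "nuc_norm (Xt - outer ((1 / real q) \<cdot>\<^sub>v (Xt *\<^sub>v ones q)) (ones q)) \<le> \<epsilon>"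
    and eps_frob: "frob_norm (Xt - outer ((1 / real q) \<cdot>\<^sub>v (Xt *\<^sub>v ones q)) (ones q)) \<le> \<epsilon>"
    and eps_spec: "spec_norm (Xt - outer ((1 / real q) \<cdot>\<^sub>v (Xt *\<^sub>v ones q)) (ones q)) \<le> \<epsilon>"
    and eps_w: "vnorm (wt - ((ones q \<bullet> wt) / real q) \<cdot>\<^sub>v ones q) \<le> \<epsilon>"
    and ystar_dim: "ystar \<in> carrier_vec q"
    and ystar_feas: "ystar \<bullet> ones q = real q * ((ones q \<bullet> zt) / real q)"
    and ystar_opt: "\<And>y. y \<in> carrier_vec q \<Longrightarrow> y \<bullet> ones q = real q * ((ones q \<bullet> zt) / real q)
                      \<Longrightarrow> (vnorm (ystar - wt))^2 \<le> (vnorm (y - wt))^2"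
    and x0_nz: "(1 / real q) \<cdot>\<^sub>v (Xt *\<^sub>v ones q) \<noteq> 0\<^sub>v d"
    and M_nz: "hcat (Xh * Diag zh) (outer ((1 / real q) \<cdot>\<^sub>v (Xt *\<^sub>v ones q)) zt) \<noteq> 0\<^sub>m d (p + q)"
  shows
    "let X = hcat Xh Xt; w = wh @\<^sub>v wt;
         x0 = (1 / real q) \<cdot>\<^sub>v (Xt *\<^sub>v ones q);
         zbar = (ones q \<bullet> zt) / real q;
         M = hcat (Xh * Diag zh) (outer x0 zt);
         \<gamma> = ((\<alpha>1 + vnorm (x - Xh *\<^sub>v zh - Xt *\<^sub>v (zbar \<cdot>\<^sub>v ones q))) * vnorm zt
                + \<alpha>1 * \<bar>zbar\<bar>) * \<epsilon>;
         \<delta> = sqrt ((2 * \<gamma> - \<alpha>2 * (\<Sum>j<q. (ystar $ j - zbar) * (ystar $ j + zbar - 2 * wt $ j)))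
                   * spec_norm M / (\<alpha>1 * (vnorm x0)^2))
     in vnorm (zt - zbar \<cdot>\<^sub>v ones q) > \<delta> \<longrightarrow>
        obj x X \<alpha>1 \<alpha>2 w (zh @\<^sub>v zt) > obj x X \<alpha>1 \<alpha>2 w (zh @\<^sub>v (zbar \<cdot>\<^sub>v ones q))"
proof -
  interpret column_group d p q Xh Xt zh zt
    using Xh_dim Xt_dim zh_dim zt_dim q_pos by unfold_locales
  show ?thesis
    using obj_decrease[OF x_dim wh_dim wt_dim a1 a2 eps_nonneg eps_nuc[folded xbar_def, folded Xdev_def]
        eps_frob[folded xbar_def, folded Xdev_def] eps_spec[folded xbar_def, folded Xdev_def] ystar_dim _
        x0_nz[folded xbar_def] M_nz[folded xbar_def, folded M_def]] ystar_opt
    unfolding Let_def zdev_def M_def xbar_def zbar_def by blast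
qed

end
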